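(* Let $n\ge2$, $k\ge1$, $i\in\{1,\dots,n\}$, $t\in\mathbb Z$, and $a\in U(\bar{\mathfrak n}_-)$ (regarded in $\widetilde{U(\bar{\mathfrak n})}$ via $\iota$). Then $$\mathcal R^i_t\,a\in\iota(I_{k\Lambda_0})+\widetilde{U(\bar{\mathfrak n})\bar{\mathfrak n}_+}.$$
   Context: $\mathfrak g=\mathfrak{sl}(n+1)$ with simple roots $\alpha_1,\dots,\alpha_n$, positive roots $\Delta_+$, root vectors $x_\alpha$ with $[x_\alpha,x_\beta]=C_{\alpha,\beta}x_{\alpha+\beta}$ ($C_{\alpha,\beta}=0$ if $\alpha+\beta\notin\Delta_+$), $\mathfrak n=\bigoplus_{\alpha\in\Delta_+}\mathbb Cx_\alpha$, $\bar{\mathfrak n}=\mathfrak n\otimes\mathbb C[t,t^{-1}]\subset\widehat{\mathfrak g}$, $x_\alpha(m)=x_\alpha\otimes t^m$, $\bar{\mathfrak n}_+=\mathfrak n\otimes\mathbb C[t]$, $\bar{\mathfrak n}_-=\mathfrak n\otimes t^{-1}\mathbb C[t^{-1}]$. Completion: let $M$ be the free monoid on $\mathbb Z\times\Delta_+$ (finite words $a=((m_1,\beta_1),\dots,(m_p,\beta_p))$, product = concatenation $\circ$). For $j\in\mathbb Z$ write $a\le j$ if $m_l+m_{l+1}+\cdots+m_p\le j$ for every $l$. Let $F$ be the set of functions $\mu:M\to\mathbb C$ such that $\{a\le j:\mu(a)\ne0\}$ is finite for every $j$; it is an algebra under $(\mu_1\mu_2)(a)=\sum_{a=b\circ c}\mu_1(b)\mu_2(c)$,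 containing the free algebra $F_0$ of finitely supported functions, generated by the indicator functions $X_\beta(m)$ of one-letter words; every $\mu\in F$ is written $\sum_a\mu(a)X(a)$ with $X(a)=X_{\beta_1}(m_1)\cdots X_{\beta_p}(m_p)$. Let $\widetilde I$ be the two-sided ideal of $F$ generated by $X_\alpha(m)X_\beta(l)-X_\beta(l)X_\alpha(m)-C_{\alpha,\beta}X_{\alpha+\beta}(m+l)$, and $\widetilde{U(\bar{\mathfrak n})}=F/\widetilde I$, with $[\mu]$ the class of $\mu$ and $\iota:U(\bar{\mathfrak n})\to\widetilde{U(\bar{\mathfrak n})}$ the homomorphism $x_\beta(m)\mapsto[X_\beta(m)]$; we write $x_\beta(m)$ for $[X_\beta(m)]$. Let $M_+$ be the set of words with $p\ge1$ such that $m_l+\cdots+m_p\ge0$ for some $l$, and $\widetilde{U(\bar{\mathfrak n})\bar{\mathfrak n}_+}=\{[\mu]:\mu\in F,\ \mu(a)=0\text{ for }a\notin M_+\}$. For a sequence $(m_1,\dots,m_{k+1})$ whose distinct values occur with multiplicities $n_1,\dots,n_j$, let $c_{m_1,\dots,m_{k+1}}=(k+1)!/(n_1!\cdots n_j!)$. For $t\in\mathbb Z$, $R^i_{-1,t}=\sum_{m_1+\cdots+m_{k+1}=-t,\ m_l\le-1}x_{\alpha_i}(m_1)\cdots x_{\alpha_i}(m_{k+1})\in U(\bar{\mathfrak n})$, and $\mathcal R^i_t=\iota(R^i_{-1,t})+\sum_{m_1\le\cdots\le m_{k+1},\ m_1+\cdots+m_{k+1}=-t,\ m_{k+1}\ge0}c_{m_1,\dots,m_{k+1}}x_{\alpha_i}(m_1)\cdots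 x_{\alpha_i}(m_{k+1})\in\widetilde{U(\bar{\mathfrak n})}$ (the class of the corresponding element of $F$). Finally $I_{k\Lambda_0}=\sum_{i=1}^n\sum_{t\ge k+1}U(\bar{\mathfrak n})R^i_{-1,t}+U(\bar{\mathfrak n})\bar{\mathfrak n}_+$, a left ideal of $U(\bar{\mathfrak n})$. *)

theory Defs
  imports Complex_Main "HOL-Library.Multiset"
begin

text \<open>Positive roots of sl(n+1): pairs (i,j) with 1 <= i < j <= n+1,
  standing for eps_i - eps_j, root vector E_ij.\<close>

type_synonym root = "nat \<times> nat"
type_synonym letter = "int \<times> root"
type_synonym word = "letter list"
type_synonym fn = "word \<Rightarrow> complex"

definition pos_root :: "nat \<Rightarrow> root \<Rightarrow> bool" where
  "pos_root n r \<longleftrightarrow> 1 \<le> fst r \<and> fst r < snd r \<and> snd r \<le> n + 1"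

definition simple_root :: "nat \<Rightarrow> root" where
  "simple_root i = (i, i + 1)"

text \<open>Structure constants for x_(i,j) = E_ij: [E_ij, E_jl] = E_il, [E_jl, E_ij] = - E_il.\<close>
definition Cst :: "root \<Rightarrow> root \<Rightarrow> complex" where
  "Cst a b = (if snd a = fst b then 1 else if snd b = fst a then -1 else 0)"

definition root_sum :: "root \<Rightarrow> root \<Rightarrow> root" where
  "root_sum a b = (if snd a = fst b then (fst a, snd b) else (fst b, snd a))"

definition word_le :: "word \<Rightarrow> int \<Rightarrow> bool" where
  "word_le a j \<longleftrightarrow> (\<forall>l < length a. sum_list (map fst (drop l a)) \<le> j)"

definition valid_word :: "nat \<Rightarrow> word \<Rightarrow> bool" where
  "valid_word n a \<longleftrightarrow> (\<forall>x \<in> set a. pos_root n (snd x))"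

text \<open>The completion F (functions on words over Z x Delta_+).\<close>
definition inF :: "nat \<Rightarrow> fn \<Rightarrow> bool" where
  "inF n \<mu> \<longleftrightarrow> (\<forall>a. \<mu> a \<noteq> 0 \<longrightarrow> valid_word n a) \<and>
                (\<forall>j. finite {a. word_le a j \<and> \<mu> a \<noteq> 0})"

text \<open>The free algebra F_0 (finitely supported functions).\<close>
definition inF0 :: "nat \<Rightarrow> fn \<Rightarrow> bool" where
  "inF0 n \<mu> \<longleftrightarrow> (\<forall>a. \<mu> a \<noteq> 0 \<longrightarrow> valid_word n a) \<and> finite {a. \<mu> a \<noteq> 0}"

definition fadd :: "fn \<Rightarrow> fn \<Rightarrow> fn" where
  "fadd f g = (\<lambda>a. f a + g a)"

definition fsub :: "fn \<Rightarrow> fn \<Rightarrow> fn" where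
  "fsub f g = (\<lambda>a. f a - g a)"

definition fscale :: "complex \<Rightarrow> fn \<Rightarrow> fn" where
  "fscale c f = (\<lambda>a. c * f a)"

definition fmul :: "fn \<Rightarrow> fn \<Rightarrow> fn" where
  "fmul f g = (\<lambda>a. \<Sum>l\<in>{0..length a}. f (take l a) * g (drop l a))"

definition Xg :: "root \<Rightarrow> int \<Rightarrow> fn" where
  "Xg b m = (\<lambda>a. if a = [(m, b)] then 1 else 0)"

definition rel :: "root \<Rightarrow> int \<Rightarrow> root \<Rightarrow> int \<Rightarrow> fn" where
  "rel a m b l = fsub (fsub (fmul (Xg a m) (Xg b l)) (fmul (Xg b l) (Xg a m)))
      (if Cst a b = 0 then (\<lambda>_. 0) else fscale (Cst a b) (Xg (root_sum a b) (m + l)))"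

definition rel_gens :: "nat \<Rightarrow> fn set" where
  "rel_gens n = {rel a m b l | a m b l. pos_root n a \<and> pos_root n b}"

inductive_set tildeI :: "nat \<Rightarrow> fn set" for n where
  zero: "(\<lambda>_. 0) \<in> tildeI n"
| gen: "g \<in> rel_gens n \<Longrightarrow> inF n \<mu> \<Longrightarrow> inF n \<nu> \<Longrightarrow> fmul (fmul \<mu> g) \<nu> \<in> tildeI n"
| add: "x \<in> tildeI n \<Longrightarrow> y \<in> tildeI n \<Longrightarrow> fadd x y \<in> tildeI n"

text \<open>Lift to F_0 of R^i_{-1,t}.\<close>
definition Rlift :: "nat \<Rightarrow> nat \<Rightarrow> int \<Rightarrow> fn" where
  "Rlift k i t = (\<lambda>a. if length a = k + 1 \<and> (\<forall>x\<in>set a. snd x = simple_root i)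
       \<and> (\<forall>x\<in>set a. fst x \<le> -1) \<and> sum_list (map fst a) = - t then 1 else 0)"

definition multinom :: "int list \<Rightarrow> nat" where
  "multinom ms = fact (length ms) div (\<Prod>v\<in>set ms. fact (count (mset ms) v))"

text \<open>Representative in F of the completed relation calR^i_t.\<close>
definition calR :: "nat \<Rightarrow> nat \<Rightarrow> int \<Rightarrow> fn" where
  "calR k i t = (\<lambda>a. if length a = k + 1 \<and> (\<forall>x\<in>set a. snd x = simple_root i)
       \<and> sum_list (map fst a) = - t
     then (if (\<forall>x\<in>set a. fst x \<le> -1) then 1
           else if sorted (map fst a) \<and> fst (last a) \<ge> 0
           then of_nat (multinom (map fst a)) else 0)
     else 0)"

text \<open>Generators of the left ideal I_{k Lambda_0} (lifted to F_0).\<close>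
definition Igens :: "nat \<Rightarrow> nat \<Rightarrow> fn set" where
  "Igens n k = {Rlift k i t | i t. 1 \<le> i \<and> i \<le> n \<and> t \<ge> int k + 1}
             \<union> {Xg b m | b m. pos_root n b \<and> m \<ge> 0}"

text \<open>Left ideal of F_0 generated by Igens; its image under iota is iota(I_{k Lambda_0}).\<close>
inductive_set Ilift :: "nat \<Rightarrow> nat \<Rightarrow> fn set" for n k where
  zero: "(\<lambda>_. 0) \<in> Ilift n k"
| gen: "g \<in> Igens n k \<Longrightarrow> inF0 n \<mu> \<Longrightarrow> fmul \<mu> g \<in> Ilift n k"
| add: "x \<in> Ilift n k \<Longrightarrow> y \<in> Ilift n k \<Longrightarrow> fadd x y \<in> Ilift n k"

definition in_Mplus :: "word \<Rightarrow> bool" where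
  "in_Mplus a \<longleftrightarrow> length a \<ge> 1 \<and> (\<exists>l < length a. sum_list (map fst (drop l a)) \<ge> 0)"

text \<open>Representatives in F_0 of elements of U(nbar_-).\<close>
definition inUneg :: "nat \<Rightarrow> fn \<Rightarrow> bool" where
  "inUneg n a \<longleftrightarrow> inF0 n a \<and> (\<forall>w. a w \<noteq> 0 \<longrightarrow> (\<forall>x\<in>set w. fst x \<le> -1))"

end

theory Submission
  imports Defs "HOL-Library.Function_Algebras" "HOL-Library.Product_Lexorder"
    "HOL-Combinatorics.Multiset_Permutations"
begin

text \<open>Let \<open>J\<close> be \<open>\<iota>(I\<^bsub>k\<Lambda>\<^sub>0\<^esub>)\<close> plus the completed \<open>U(n)n\<^sub>+\<close>, taken modulo \<open>tildeI n\<close>.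
  As \<open>J\<close> is stable under left multiplication, it suffices to show \<open>calR \<cdot> X(c) \<in> J\<close> for
  every word \<open>c\<close>. Compare \<open>calR\<close> with the symmetric sum \<open>S\<^sub>D\<close> of all words
  \<open>x\<^sub>\<alpha>(m\<^sub>1)\<cdots>x\<^sub>\<alpha>(m\<^sub>k\<^sub>+\<^sub>1)\<close> with \<open>|m\<^sub>j| \<le> D\<close> and \<open>\<Sigma> m\<^sub>j = -t\<close>. The letters
  \<open>x\<^sub>\<alpha>(m)\<close> commute, so modulo \<open>tildeI n\<close> only the total coefficient of each class of
  rearrangements matters. On classes with all degrees small, \<open>calR\<close> and \<open>S\<^sub>D\<close> have equal
  totals (the multinomial coefficient counts the class); a class with a large degree, sorted
  so that this degree comes last and followed by \<open>c\<close>, lies in \<open>M\<^sub>+\<close>. Hence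
  \<open>(calR - S\<^sub>D) \<cdot> X(c) \<in> J\<close> for large \<open>D\<close>.

  That \<open>S\<^sub>D \<cdot> X(c) \<in> J\<close> for large \<open>D\<close> is proved by induction on the length of \<open>c\<close>. For
  \<open>c = []\<close>, \<open>S\<^sub>D\<close> differs from \<open>R\<^sup>i\<^sub>-\<^sub>1\<^sub>,\<^sub>t\<close> (a generator of the ideal, or \<open>0\<close> when
  \<open>t \<le> k\<close>) only on classes containing a degree \<open>\<ge> 0\<close>. For \<open>c = x\<^sub>\<beta>(m) c'\<close>, commuting
  \<open>x\<^sub>\<beta>(m)\<close> to the left of \<open>S\<^sub>D\<close> leaves commutator terms in which one letter has absorbed
  \<open>x\<^sub>\<beta>(m)\<close>; re-indexing that letter identifies them, modulo sorting, with the terms for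
  \<open>x\<^sub>\<beta>(0)\<close> and total \<open>t - m\<close>. Finally a letter \<open>x\<^sub>\<beta>(0)\<close> commuted to the end of the word
  lands in \<open>M\<^sub>+\<close>, and the commutators created on the way are words as long as \<open>c'\<close>.\<close>

section \<open>The completed algebra\<close>

definition Xword :: "word \<Rightarrow> fn" where
  "Xword w = (\<lambda>a. if a = w then 1 else 0)"

definition splits :: "word \<Rightarrow> (word \<times> word) set" where
  "splits w = {(u, v). u @ v = w}"

lemma splits_eq: "splits w = (\<lambda>l. (take l w, drop l w)) ` {0..length w}"
proof -
  have "(u, v) \<in> (\<lambda>l. (take l w, drop l w)) ` {0..length w}" if "u @ v = w" for u v
    using that by (auto intro!: image_eqI[where x="length u"])
  then show ?thesis unfolding splits_def by auto
qed

lemma finite_splits [simp]: "finite (splits w)"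
  by (simp add: splits_eq)

lemma fmul_splits: "fmul f g w = (\<Sum>(u, v)\<in>splits w. f u * g v)"
proof -
  have inj: "inj_on (\<lambda>l. (take l w, drop l w)) {0..length w}"
    by (rule inj_onI) (metis atLeastAtMost_iff length_take min.absorb2 prod.inject)
  show ?thesis unfolding fmul_def splits_eq
    by (simp add: sum.reindex[OF inj])
qed

lemma fmul_assoc: "fmul (fmul f g) h = fmul f (fmul g h)"
proof
  fix w
  have "fmul (fmul f g) h w =
      (\<Sum>pz\<in>splits w. \<Sum>xy\<in>splits (fst pz). f (fst xy) * g (snd xy) * h (snd pz))"
    by (simp add: fmul_splits sum_distrib_right case_prod_beta)
  also have "\<dots> =
      (\<Sum>(pz, xy)\<in>Sigma (splits w) (\<lambda>pz. splits (fst pz)). f (fst xy) * g (snd xy) * h (snd pz))"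
    by (rule sum.Sigma) auto
  also have "\<dots> =
      (\<Sum>(xq, yz)\<in>Sigma (splits w) (\<lambda>xq. splits (snd xq)). f (fst xq) * g (fst yz) * h (snd yz))"
    by (rule sum.reindex_bij_witness
          [where i = "\<lambda>(xq, yz). ((fst xq @ fst yz, snd yz), (fst xq, fst yz))"
             and j = "\<lambda>(pz, xy). ((fst xy, snd xy @ snd pz), (snd xy, snd pz))"])
       (auto simp: splits_def)
  also have "\<dots> =
      (\<Sum>xq\<in>splits w. \<Sum>yz\<in>splits (snd xq). f (fst xq) * g (fst yz) * h (snd yz))"
    by (rule sum.Sigma[symmetric]) auto
  also have "\<dots> = fmul f (fmul g h) w"
    by (simp add: fmul_splits sum_distrib_left case_prod_beta mult.assoc)
  finally show "fmul (fmul f g) h w = fmul f (fmul g h) w" .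
qed

lemma fmul_add_left: "fmul (f + g) h = fmul f h + fmul g h"
  by (rule ext) (simp add: fmul_def distrib_right sum.distrib)

lemma fmul_add_right: "fmul h (f + g) = fmul h f + fmul h g"
  by (rule ext) (simp add: fmul_def distrib_left sum.distrib)

lemma fmul_diff_left: "fmul (f - g) h = fmul f h - fmul g h"
  by (rule ext) (simp add: fmul_def left_diff_distrib sum_subtractf)

lemma fmul_diff_right: "fmul h (f - g) = fmul h f - fmul h g"
  by (rule ext) (simp add: fmul_def right_diff_distrib sum_subtractf)

lemma fmul_zero_left [simp]: "fmul 0 h = 0"
  by (rule ext) (simp add: fmul_def)

lemma fmul_zero_right [simp]: "fmul h 0 = 0"
  by (rule ext) (simp add: fmul_def)

lemma fmul_scale_left: "fmul (fscale c f) h = fscale c (fmul f h)"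
  by (rule ext) (simp add: fmul_def fscale_def sum_distrib_left mult.assoc)

lemma fmul_scale_right: "fmul h (fscale c f) = fscale c (fmul h f)"
  by (rule ext) (simp add: fmul_def fscale_def sum_distrib_left mult.left_commute)

lemma sum_fun_apply: "(\<Sum>x\<in>A. F x) w = (\<Sum>x\<in>A. F x w)"
  by (induction A rule: infinite_finite_induct) auto

lemma fmul_sum_left: "fmul (\<Sum>x\<in>A. F x) h = (\<Sum>x\<in>A. fmul (F x) h)"
proof (induction A rule: infinite_finite_induct)
  case (insert x A) then show ?case by (metis sum.insert fmul_add_left)
next
  case (infinite A) then show ?case by (simp only: sum.infinite[OF infinite] fmul_zero_left)
qed (simp only: sum.empty fmul_zero_left)

lemma fmul_sum_right: "fmul h (\<Sum>x\<in>A. F x) = (\<Sum>x\<in>A. fmul h (F x))"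
proof (induction A rule: infinite_finite_induct)
  case (insert x A) then show ?case by (metis sum.insert fmul_add_right)
next
  case (infinite A) then show ?case by (simp only: sum.infinite[OF infinite] fmul_zero_right)
qed (simp only: sum.empty fmul_zero_right)

lemma fmul_Xword: "fmul (Xword u) (Xword v) = Xword (u @ v)"
proof
  fix w
  have "fmul (Xword u) (Xword v) w = (\<Sum>p\<in>splits w. if p = (u, v) then 1 else 0)"
    unfolding fmul_splits by (intro sum.cong refl) (auto simp: Xword_def split: if_split_asm)
  also have "\<dots> = (if (u, v) \<in> splits w then 1 else 0)"
    by (rule sum.delta[OF finite_splits])
  also have "\<dots> = Xword (u @ v) w"
    by (simp add: Xword_def splits_def eq_commute)
  finally show "fmul (Xword u) (Xword v) w = Xword (u @ v) w" .
qed

lemma fmul_Xword_Nil_left [simp]: "fmul (Xword []) f = f"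
proof
  fix w
  have "fmul (Xword []) f w = (\<Sum>p\<in>splits w. if p = ([],w) then f w else 0)"
    unfolding fmul_splits
  proof (intro sum.cong refl)
    fix p assume "p \<in> splits w"
    then obtain a b where "p = (a,b)" "a @ b = w" by (auto simp: splits_def)
    then show "(case p of (u, v) \<Rightarrow> Xword [] u * f v) = (if p = ([], w) then f w else 0)"
      by (cases "a = []") (auto simp: Xword_def)
  qed
  also have "\<dots> = f w" by (subst sum.delta[OF finite_splits]) (simp add: splits_def)
  finally show "fmul (Xword []) f w = f w" .
qed

lemma fmul_Xword_Nil_right [simp]: "fmul f (Xword []) = f"
proof
  fix w
  have "fmul f (Xword []) w = (\<Sum>p\<in>splits w. if p = (w,[]) then f w else 0)"
    unfolding fmul_splits
  proof (intro sum.cong refl)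
    fix p assume "p \<in> splits w"
    then obtain a b where "p = (a,b)" "a @ b = w" by (auto simp: splits_def)
    then show "(case p of (u, v) \<Rightarrow> f u * Xword [] v) = (if p = (w, []) then f w else 0)"
      by (cases "b = []") (auto simp: Xword_def)
  qed
  also have "\<dots> = f w" by (subst sum.delta[OF finite_splits]) (simp add: splits_def)
  finally show "fmul f (Xword []) w = f w" .
qed

lemma fsub_eq [simp]: "fsub f g = f - g"
  by (simp add: fsub_def fun_eq_iff)

lemma fadd_eq [simp]: "fadd f g = f + g"
  by (simp add: fadd_def fun_eq_iff)

lemma fmul_nonzero_split: "fmul f g w \<noteq> 0 \<Longrightarrow> \<exists>u v. w = u @ v \<and> f u \<noteq> 0 \<and> g v \<noteq> 0"
proof (rule ccontr)
  assume ne: "fmul f g w \<noteq> 0" and n: "\<not> (\<exists>u v. w = u @ v \<and> f u \<noteq> 0 \<and> g v \<noteq> 0)"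
  have "\<forall>p\<in>splits w. (case p of (u, v) \<Rightarrow> f u * g v) = 0"
  proof
    fix p assume "p \<in> splits w"
    then obtain u v where "p = (u, v)" "w = u @ v" by (auto simp: splits_def)
    with n show "(case p of (u, v) \<Rightarrow> f u * g v) = 0" by auto
  qed
  then have "fmul f g w = 0" unfolding fmul_splits by (rule sum.neutral)
  with ne show False by simp
qed

lemma fn_eq_sum_Xword:
  assumes "finite S" "{w. f w \<noteq> 0} \<subseteq> S"
  shows "f = (\<Sum>w\<in>S. fscale (f w) (Xword w))"
proof
  fix a
  have "(\<Sum>w\<in>S. fscale (f w) (Xword w)) a = (\<Sum>w\<in>S. if a = w then f a else 0)"
    unfolding sum_fun_apply by (intro sum.cong refl) (simp add: fscale_def Xword_def)
  also have "\<dots> = (if a \<in> S then f a else 0)" by (rule sum.delta'[OF assms(1)])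
  also have "\<dots> = f a" using assms(2) by auto
  finally show "f a = (\<Sum>w\<in>S. fscale (f w) (Xword w)) a" by simp
qed

lemma fscale_minus_one: "fscale (-1) f = - f"
  by (auto simp: fscale_def)

lemma fscale_zero_right [simp]: "fscale c 0 = 0"
  by (auto simp: fscale_def)

lemma fscale_one [simp]: "fscale 1 f = f"
  by (auto simp: fscale_def)

lemma fscale_zero_left [simp]: "fscale 0 f = 0"
  by (auto simp: fscale_def)

lemma fscale_add: "fscale c (f + g) = fscale c f + fscale c g"
  by (auto simp: fscale_def distrib_left)

lemma fscale_diff: "fscale c (f - g) = fscale c f - fscale c g"
  by (auto simp: fscale_def right_diff_distrib)

lemma fscale_sum: "fscale c (\<Sum>x\<in>A. F x) = (\<Sum>x\<in>A. fscale c (F x))"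
  by (auto simp: fscale_def sum_fun_apply sum_distrib_left)

lemma sum_fscale_const: "(\<Sum>x\<in>A. fscale (c x) F) = fscale (\<Sum>x\<in>A. c x) F"
  by (rule ext) (simp add: sum_fun_apply fscale_def sum_distrib_right)

lemma plus_fn_eq: "(\<lambda>a. x a + y a) = (x + y :: fn)"
  by (simp add: plus_fun_def)

lemma zero_fn_eq: "(\<lambda>_. 0::complex) = (0::fn)"
  by (simp add: zero_fun_def)

lemma if_one_zero_eq_zero [simp]: "(if P then (1::complex) else 0) = 0 \<longleftrightarrow> \<not> P"
  by simp

lemma word_le_append:
  assumes "word_le (u @ v) j"
  shows "word_le v j" "word_le u (j - sum_list (map fst v))"
proof -
  show "word_le v j" unfolding word_le_def
  proof (intro allI impI)
    fix l assume "l < length v"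
    then have "length u + l < length (u @ v)" by simp
    with assms have "sum_list (map fst (drop (length u + l) (u @ v))) \<le> j"
      unfolding word_le_def by blast
    moreover have "drop (length u + l) (u @ v) = drop l v" by simp
    ultimately show "sum_list (map fst (drop l v)) \<le> j" by simp
  qed
  show "word_le u (j - sum_list (map fst v))" unfolding word_le_def
  proof (intro allI impI)
    fix l assume l: "l < length u"
    then have "l < length (u @ v)" by simp
    with assms have "sum_list (map fst (drop l (u @ v))) \<le> j" by (auto simp: word_le_def)
    with l show "sum_list (map fst (drop l u)) \<le> j - sum_list (map fst v)" by simp
  qed
qed

lemma valid_word_append [simp]: "valid_word n (u @ v) \<longleftrightarrow> valid_word n u \<and> valid_word n v"
  by (auto simp: valid_word_def)

lemma valid_word_Cons [simp]: "valid_word n (x # v) \<longleftrightarrow> pos_root n (snd x) \<and> valid_word n v"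
  by (auto simp: valid_word_def)

lemma valid_word_Nil [simp]: "valid_word n []"
  by (auto simp: valid_word_def)

lemma inF_fmul:
  assumes "inF n f" "inF n g"
  shows "inF n (fmul f g)"
  unfolding inF_def
proof (intro conjI allI impI)
  fix w assume "fmul f g w \<noteq> 0"
  then obtain u v where "w = u @ v" "f u \<noteq> 0" "g v \<noteq> 0" using fmul_nonzero_split by blast
  with assms show "valid_word n w" by (auto simp: inF_def)
next
  fix j
  let ?V = "{v. word_le v j \<and> g v \<noteq> 0}"
  let ?U = "\<lambda>v. {u. word_le u (j - sum_list (map fst v)) \<and> f u \<noteq> 0}"
  have "{w. word_le w j \<and> fmul f g w \<noteq> 0} \<subseteq> (\<lambda>(v, u). u @ v) ` Sigma ?V ?U"
  proof
    fix w assume "w \<in> {w. word_le w j \<and> fmul f g w \<noteq> 0}"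
    then have w: "word_le w j" "fmul f g w \<noteq> 0" by auto
    then obtain u v where "w = u @ v" "f u \<noteq> 0" "g v \<noteq> 0" using fmul_nonzero_split by blast
    with w word_le_append[of u v j] show "w \<in> (\<lambda>(v, u). u @ v) ` Sigma ?V ?U"
      by (auto intro!: image_eqI[where x = "(v, u)"])
  qed
  moreover have "finite (Sigma ?V ?U)"
    using assms by (intro finite_SigmaI) (auto simp: inF_def)
  ultimately show "finite {w. word_le w j \<and> fmul f g w \<noteq> 0}"
    by (meson finite_imageI finite_subset)
qed

lemma inF0_imp_inF: "inF0 n f \<Longrightarrow> inF n f"
  by (auto simp: inF0_def inF_def)

lemma inF0_fmul:
  assumes "inF0 n f" "inF0 n g"
  shows "inF0 n (fmul f g)"
  unfolding inF0_def
proof (intro conjI allI impI)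
  fix w assume "fmul f g w \<noteq> 0"
  then obtain u v where "w = u @ v" "f u \<noteq> 0" "g v \<noteq> 0" using fmul_nonzero_split by blast
  with assms show "valid_word n w" by (auto simp: inF0_def)
next
  have "{w. fmul f g w \<noteq> 0} \<subseteq> (\<lambda>(u, v). u @ v) ` ({u. f u \<noteq> 0} \<times> {v. g v \<noteq> 0})"
    using fmul_nonzero_split by fastforce
  moreover have "finite ({u. f u \<noteq> 0} \<times> {v. g v \<noteq> 0})" using assms by (auto simp: inF0_def)
  ultimately show "finite {w. fmul f g w \<noteq> 0}" by (meson finite_imageI finite_subset)
qed

lemma inF0_Xword: "valid_word n w \<Longrightarrow> inF0 n (Xword w)"
  by (auto simp: inF0_def Xword_def)

lemma inF_Xword: "valid_word n w \<Longrightarrow> inF n (Xword w)"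
  by (simp add: inF0_Xword inF0_imp_inF)

lemma inF_mono:
  assumes "inF n f" "\<And>w. g w \<noteq> 0 \<Longrightarrow> f w \<noteq> 0"
  shows "inF n g"
  unfolding inF_def
proof (intro conjI allI impI)
  fix a assume "g a \<noteq> 0" then show "valid_word n a" using assms by (auto simp: inF_def)
next
  fix j
  have "{w. word_le w j \<and> g w \<noteq> 0} \<subseteq> {w. word_le w j \<and> f w \<noteq> 0}" using assms(2) by auto
  moreover have "finite {w. word_le w j \<and> f w \<noteq> 0}" using assms(1) by (auto simp: inF_def)
  ultimately show "finite {w. word_le w j \<and> g w \<noteq> 0}" by (rule finite_subset)
qed

lemma inF_add:
  assumes "inF n f" "inF n g"
  shows "inF n (f + g)"
  unfolding inF_def
proof (intro conjI allI impI)
  fix a assume "(f + g) a \<noteq> 0"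
  then show "valid_word n a" using assms by (cases "f a = 0") (auto simp: inF_def)
next
  fix j
  have "{w. word_le w j \<and> (f + g) w \<noteq> 0} \<subseteq>
      {w. word_le w j \<and> f w \<noteq> 0} \<union> {w. word_le w j \<and> g w \<noteq> 0}"
    by auto
  moreover have "finite ({w. word_le w j \<and> f w \<noteq> 0} \<union> {w. word_le w j \<and> g w \<noteq> 0})"
    using assms by (auto simp: inF_def)
  ultimately show "finite {w. word_le w j \<and> (f + g) w \<noteq> 0}" by (rule finite_subset)
qed

lemma inF_scale: "inF n f \<Longrightarrow> inF n (fscale c f)"
  by (erule inF_mono) (auto simp: fscale_def)

lemma inF_zero: "inF n 0"
  by (auto simp: inF_def)

lemma inF0_scale: "inF0 n f \<Longrightarrow> inF0 n (fscale c f)"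
proof -
  assume "inF0 n f"
  moreover have "{w. fscale c f w \<noteq> 0} \<subseteq> {w. f w \<noteq> 0}" by (auto simp: fscale_def)
  ultimately show ?thesis by (auto simp: inF0_def fscale_def intro: finite_subset)
qed

section \<open>The ideals and the target set\<close>

lemma tildeI_zero: "0 \<in> tildeI n"
  using tildeI.zero zero_fn_eq by metis

lemma tildeI_add: "x \<in> tildeI n \<Longrightarrow> y \<in> tildeI n \<Longrightarrow> x + y \<in> tildeI n"
  using tildeI.add by fastforce

lemma tildeI_scale: "x \<in> tildeI n \<Longrightarrow> fscale c x \<in> tildeI n"
proof (induction rule: tildeI.induct)
  case zero then show ?case using tildeI_zero zero_fn_eq by simp
next
  case (gen g \<mu> \<nu>)
  have "fscale c (fmul (fmul \<mu> g) \<nu>) = fmul (fmul (fscale c \<mu>) g) \<nu>" by (simp add: fmul_scale_left)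
  with gen show ?case by (metis inF_scale tildeI.gen)
next
  case (add x y) then show ?case by (simp add: plus_fn_eq fscale_add tildeI_add)
qed

lemma tildeI_sum: "(\<And>a. a \<in> A \<Longrightarrow> F a \<in> tildeI n) \<Longrightarrow> (\<Sum>a\<in>A. F a) \<in> tildeI n"
  by (induction A rule: infinite_finite_induct) (auto simp: tildeI_zero tildeI_add)

lemma tildeI_fmul_left: "x \<in> tildeI n \<Longrightarrow> inF n \<phi> \<Longrightarrow> fmul \<phi> x \<in> tildeI n"
proof (induction rule: tildeI.induct)
  case zero then show ?case using tildeI_zero zero_fn_eq by simp
next
  case (gen g \<mu> \<nu>)
  have "fmul \<phi> (fmul (fmul \<mu> g) \<nu>) = fmul (fmul (fmul \<phi> \<mu>) g) \<nu>" by (simp add: fmul_assoc)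
  with gen show ?case by (metis inF_fmul tildeI.gen)
next
  case (add x y) then show ?case by (simp add: plus_fn_eq fmul_add_right tildeI_add)
qed

lemma tildeI_fmul_right: "x \<in> tildeI n \<Longrightarrow> inF n \<phi> \<Longrightarrow> fmul x \<phi> \<in> tildeI n"
proof (induction rule: tildeI.induct)
  case zero then show ?case using tildeI_zero zero_fn_eq by simp
next
  case (gen g \<mu> \<nu>)
  have "fmul (fmul (fmul \<mu> g) \<nu>) \<phi> = fmul (fmul \<mu> g) (fmul \<nu> \<phi>)" by (simp add: fmul_assoc)
  with gen show ?case by (metis inF_fmul tildeI.gen)
next
  case (add x y) then show ?case by (simp add: plus_fn_eq fmul_add_left tildeI_add)
qed

lemma Ilift_zero: "0 \<in> Ilift n k"
  using Ilift.zero zero_fn_eq by metis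

lemma Ilift_add: "x \<in> Ilift n k \<Longrightarrow> y \<in> Ilift n k \<Longrightarrow> x + y \<in> Ilift n k"
  using Ilift.add by fastforce

lemma Ilift_scale: "x \<in> Ilift n k \<Longrightarrow> fscale c x \<in> Ilift n k"
proof (induction rule: Ilift.induct)
  case zero then show ?case using Ilift_zero zero_fn_eq by simp
next
  case (gen g \<mu>)
  have "fscale c (fmul \<mu> g) = fmul (fscale c \<mu>) g" by (simp add: fmul_scale_left)
  with gen show ?case by (metis inF0_scale Ilift.gen)
next
  case (add x y) then show ?case by (simp add: plus_fn_eq fscale_add Ilift_add)
qed

lemma Ilift_fmul_left: "x \<in> Ilift n k \<Longrightarrow> inF0 n \<phi> \<Longrightarrow> fmul \<phi> x \<in> Ilift n k"
proof (induction rule: Ilift.induct)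
  case zero then show ?case using Ilift_zero zero_fn_eq by simp
next
  case (gen g \<mu>)
  have "fmul \<phi> (fmul \<mu> g) = fmul (fmul \<phi> \<mu>) g" by (simp add: fmul_assoc)
  with gen show ?case by (metis inF0_fmul Ilift.gen)
next
  case (add x y) then show ?case by (simp add: plus_fn_eq fmul_add_right Ilift_add)
qed

lemma Ilift_gen: "g \<in> Igens n k \<Longrightarrow> g \<in> Ilift n k"
  using Ilift.gen[of g n k "Xword []"] inF0_Xword[of n "[]"] by simp

definition Mplus_fn :: "nat \<Rightarrow> fn \<Rightarrow> bool" where
  "Mplus_fn n \<mu> \<longleftrightarrow> inF n \<mu> \<and> (\<forall>w. \<mu> w \<noteq> 0 \<longrightarrow> in_Mplus w)"

lemma Mplus_fn_zero: "Mplus_fn n 0"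
  by (auto simp: Mplus_fn_def inF_zero)

lemma Mplus_fn_add:
  assumes "Mplus_fn n f" "Mplus_fn n g"
  shows "Mplus_fn n (f + g)"
  unfolding Mplus_fn_def
proof (intro conjI allI impI)
  show "inF n (f + g)" using assms by (simp add: Mplus_fn_def inF_add)
  fix w assume "(f + g) w \<noteq> 0"
  then show "in_Mplus w" using assms by (cases "f w = 0") (auto simp: Mplus_fn_def)
qed

lemma Mplus_fn_scale: "Mplus_fn n f \<Longrightarrow> Mplus_fn n (fscale c f)"
  unfolding Mplus_fn_def using inF_scale by (auto simp: fscale_def)

lemma in_Mplus_append:
  assumes "in_Mplus v"
  shows "in_Mplus (u @ v)"
proof -
  obtain l where l: "l < length v" "sum_list (map fst (drop l v)) \<ge> 0"
    using assms by (auto simp: in_Mplus_def)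
  have "length u + l < length (u @ v)" "drop (length u + l) (u @ v) = drop l v" using l by auto
  then show ?thesis unfolding in_Mplus_def using l by (intro conjI exI[of _ "length u + l"]) auto
qed

lemma Mplus_fn_fmul_left: "Mplus_fn n f \<Longrightarrow> inF n \<phi> \<Longrightarrow> Mplus_fn n (fmul \<phi> f)"
  unfolding Mplus_fn_def
  by (auto simp: inF_fmul dest!: fmul_nonzero_split intro: in_Mplus_append)

text \<open>\<open>in_J n k f\<close> says that the class of \<open>f\<close> lies in
  \<open>\<iota>(I\<^bsub>k\<Lambda>\<^sub>0\<^esub>) + U(n)n\<^sub>+\<close> modulo \<open>tildeI n\<close>.\<close>
definition in_J :: "nat \<Rightarrow> nat \<Rightarrow> fn \<Rightarrow> bool" where
  "in_J n k f \<longleftrightarrow> (\<exists>x\<in>Ilift n k. \<exists>y\<in>tildeI n. \<exists>\<mu>. Mplus_fn n \<mu> \<and> f = x + y + \<mu>)"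

lemma in_J_intro:
  "x \<in> Ilift n k \<Longrightarrow> y \<in> tildeI n \<Longrightarrow> Mplus_fn n \<mu> \<Longrightarrow> f = x + y + \<mu> \<Longrightarrow> in_J n k f"
  unfolding in_J_def by blast

lemma in_J_tildeI: "y \<in> tildeI n \<Longrightarrow> in_J n k y"
  by (rule in_J_intro[OF Ilift_zero _ Mplus_fn_zero]) simp_all

lemma in_J_Ilift: "x \<in> Ilift n k \<Longrightarrow> in_J n k x"
  by (rule in_J_intro[OF _ tildeI_zero Mplus_fn_zero]) simp_all

lemma in_J_Mplus_fn: "Mplus_fn n \<mu> \<Longrightarrow> in_J n k \<mu>"
  by (rule in_J_intro[OF Ilift_zero tildeI_zero]) simp_all

lemma in_J_zero: "in_J n k 0"
  by (rule in_J_Mplus_fn[OF Mplus_fn_zero])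

lemma in_J_add: "in_J n k f \<Longrightarrow> in_J n k g \<Longrightarrow> in_J n k (f + g)"
proof -
  assume "in_J n k f" "in_J n k g"
  then obtain x1 y1 m1 x2 y2 m2 where
      "x1 \<in> Ilift n k" "y1 \<in> tildeI n" "Mplus_fn n m1" "f = x1 + y1 + m1"
      "x2 \<in> Ilift n k" "y2 \<in> tildeI n" "Mplus_fn n m2" "g = x2 + y2 + m2"
    unfolding in_J_def by blast
  moreover have "f + g = (x1 + x2) + (y1 + y2) + (m1 + m2)"
    using calculation by (simp add: algebra_simps)
  ultimately show ?thesis by (intro in_J_intro[OF Ilift_add tildeI_add Mplus_fn_add])
qed

lemma in_J_scale: "in_J n k f \<Longrightarrow> in_J n k (fscale c f)"
proof -
  assume "in_J n k f"
  then obtain x y m where "x \<in> Ilift n k" "y \<in> tildeI n" "Mplus_fn n m" "f = x + y + m"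
    unfolding in_J_def by blast
  moreover have "fscale c f = fscale c x + fscale c y + fscale c m"
    using calculation by (simp add: fscale_add)
  ultimately show ?thesis by (intro in_J_intro[OF Ilift_scale tildeI_scale Mplus_fn_scale])
qed

lemma in_J_diff: "in_J n k f \<Longrightarrow> in_J n k g \<Longrightarrow> in_J n k (f - g)"
  using in_J_add[of n k f "- g"] in_J_scale[of n k g "-1"] by (simp add: fscale_minus_one)

lemma in_J_add_iff: "in_J n k g \<Longrightarrow> in_J n k (f + g) \<longleftrightarrow> in_J n k f"
  using in_J_add in_J_diff by fastforce

lemma in_J_sum: "(\<And>a. a \<in> A \<Longrightarrow> in_J n k (F a)) \<Longrightarrow> in_J n k (\<Sum>a\<in>A. F a)"
  by (induction A rule: infinite_finite_induct) (auto simp: in_J_zero in_J_add)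

lemma in_J_fmul_left: "in_J n k f \<Longrightarrow> inF0 n \<phi> \<Longrightarrow> in_J n k (fmul \<phi> f)"
proof -
  assume "in_J n k f" and \<phi>: "inF0 n \<phi>"
  then obtain x y m where "x \<in> Ilift n k" "y \<in> tildeI n" "Mplus_fn n m" "f = x + y + m"
    unfolding in_J_def by blast
  moreover have "fmul \<phi> f = fmul \<phi> x + fmul \<phi> y + fmul \<phi> m"
    using calculation by (simp add: fmul_add_right)
  ultimately show ?thesis
    using \<phi> inF0_imp_inF
    by (intro in_J_intro[OF Ilift_fmul_left tildeI_fmul_left Mplus_fn_fmul_left]) auto
qed

section \<open>Commutation modulo the relations\<close>

lemma Xg_eq_Xword: "Xg b m = Xword [(m, b)]"
  by (simp add: Xg_def Xword_def fun_eq_iff)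

lemma rel_eq_Xword:
  "rel a m b l = Xword [(m, a), (l, b)] - Xword [(l, b), (m, a)]
                  - fscale (Cst a b) (Xword [(m + l, root_sum a b)])"
  by (simp add: rel_def Xg_eq_Xword fmul_Xword zero_fn_eq)

lemma rel_in_tildeI: "pos_root n a \<Longrightarrow> pos_root n b \<Longrightarrow> rel a m b l \<in> tildeI n"
proof -
  assume "pos_root n a" "pos_root n b"
  then have "rel a m b l \<in> rel_gens n" unfolding rel_gens_def by blast
  then have "fmul (fmul (Xword []) (rel a m b l)) (Xword []) \<in> tildeI n"
    using inF_Xword[of n "[]"] by (intro tildeI.gen) auto
  then show ?thesis by simp
qed

lemma Xword_swap_in_tildeI:
  assumes "valid_word n u" "valid_word n v" "pos_root n a" "pos_root n b"
  shows "Xword (u @ (m, a) # (l, b) # v) - Xword (u @ (l, b) # (m, a) # v)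
           - fscale (Cst a b) (Xword (u @ (m + l, root_sum a b) # v)) \<in> tildeI n"
proof -
  have "fmul (fmul (Xword u) (rel a m b l)) (Xword v) \<in> tildeI n"
    by (intro tildeI_fmul_right tildeI_fmul_left rel_in_tildeI inF_Xword assms)
  then show ?thesis
    by (simp add: rel_eq_Xword fmul_diff_left fmul_diff_right fmul_scale_left fmul_scale_right
        fmul_Xword)
qed

text \<open>With \<open>l = (m, \<beta>)\<close>, \<open>merge_at b l p\<close> replaces the \<open>p\<close>-th letter \<open>x\<^sub>\<gamma>(j)\<close> of \<open>b\<close> by
  \<open>x\<^sub>\<gamma>\<^sub>+\<^sub>\<beta>(j + m)\<close>; the structure constant is kept separately.\<close>
definition merge_at :: "word \<Rightarrow> letter \<Rightarrow> nat \<Rightarrow> word" where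
  "merge_at b l p = b[p := (fst (b ! p) + fst l, root_sum (snd (b ! p)) (snd l))]"

definition commutator_terms :: "word \<Rightarrow> letter \<Rightarrow> fn" where
  "commutator_terms b l =
     (\<Sum>p<length b. fscale (Cst (snd (b ! p)) (snd l)) (Xword (merge_at b l p)))"

lemma commutator_terms_Cons:
  "commutator_terms (x # b) l =
     fscale (Cst (snd x) (snd l)) (Xword ((fst x + fst l, root_sum (snd x) (snd l)) # b))
     + fmul (Xword [x]) (commutator_terms b l)"
proof -
  have "(\<Sum>q<length b. fscale (Cst (snd ((x # b) ! Suc q)) (snd l))
                            (Xword (merge_at (x # b) l (Suc q))))
      = fmul (Xword [x]) (commutator_terms b l)"
    unfolding commutator_terms_def
    by (simp add: fmul_sum_right fmul_scale_right fmul_Xword merge_at_def)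
  then show ?thesis
    unfolding commutator_terms_def
    by (simp add: sum.lessThan_Suc_shift merge_at_def del: sum.lessThan_Suc)
qed

lemma Xword_snoc_commute:
  assumes "valid_word n b" "pos_root n (snd l)"
  shows "Xword (b @ [l]) - Xword (l # b) - commutator_terms b l \<in> tildeI n"
  using assms(1)
proof (induction b)
  case Nil
  then show ?case by (simp add: commutator_terms_def tildeI_zero tildeI.zero)
next
  case (Cons x b)
  let ?swap = "Xword (x # l # b) - Xword (l # x # b)
      - fscale (Cst (snd x) (snd l)) (Xword ((fst x + fst l, root_sum (snd x) (snd l)) # b))"
  have "?swap \<in> tildeI n"
    using Xword_swap_in_tildeI[of n "[]" b "snd x" "snd l" "fst x" "fst l"] Cons.prems assms(2)
    by simp
  moreover have
    "fmul (Xword [x]) (Xword (b @ [l]) - Xword (l # b) - commutator_terms b l) \<in> tildeI n"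
    using Cons.prems by (intro tildeI_fmul_left[OF Cons.IH] inF_Xword) auto
  moreover have "Xword ((x # b) @ [l]) - Xword (l # x # b) - commutator_terms (x # b) l =
      fmul (Xword [x]) (Xword (b @ [l]) - Xword (l # b) - commutator_terms b l) + ?swap"
    by (simp add: commutator_terms_Cons fmul_diff_right fmul_Xword)
  ultimately show ?case by (metis tildeI_add)
qed

definition commuting_roots :: "nat \<Rightarrow> root set \<Rightarrow> bool" where
  "commuting_roots n R \<longleftrightarrow> (\<forall>a\<in>R. pos_root n a) \<and> (\<forall>a\<in>R. \<forall>b\<in>R. Cst a b = 0)"

lemma valid_word_if_commuting_roots:
  "commuting_roots n R \<Longrightarrow> \<forall>x\<in>set w. snd x \<in> R \<Longrightarrow> valid_word n w"
  by (auto simp: commuting_roots_def valid_word_def)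

lemma Xword_insort_in_tildeI:
  assumes R: "commuting_roots n R" and "snd x \<in> R" "\<forall>y\<in>set ys. snd y \<in> R"
  shows "Xword (x # ys) - Xword (insort x ys) \<in> tildeI n"
  using assms(3)
proof (induction ys)
  case (Cons y ys)
  show ?case
  proof (cases "x \<le> y")
    case False
    have "Xword (x # y # ys) - Xword (y # x # ys) \<in> tildeI n"
      using Xword_swap_in_tildeI[of n "[]" ys "snd x" "snd y" "fst x" "fst y"] assms(2) Cons.prems R
      by (simp add: commuting_roots_def valid_word_if_commuting_roots)
    moreover have "fmul (Xword [y]) (Xword (x # ys) - Xword (insort x ys)) \<in> tildeI n"
      using Cons.prems R
      by (intro tildeI_fmul_left[OF Cons.IH] inF_Xword) (auto simp: commuting_roots_def)
    moreover have "Xword (x # y # ys) - Xword (insort x (y # ys)) =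
        (Xword (x # y # ys) - Xword (y # x # ys))
        + fmul (Xword [y]) (Xword (x # ys) - Xword (insort x ys))"
      using False by (simp add: fmul_diff_right fmul_Xword)
    ultimately show ?thesis by (metis tildeI_add)
  qed (simp add: tildeI_zero tildeI.zero)
qed (simp add: tildeI_zero tildeI.zero)

lemma Xword_sort_in_tildeI:
  assumes R: "commuting_roots n R" and "\<forall>y\<in>set w. snd y \<in> R"
  shows "Xword w - Xword (sort w) \<in> tildeI n"
  using assms(2)
proof (induction w)
  case (Cons x xs)
  have "fmul (Xword [x]) (Xword xs - Xword (sort xs)) \<in> tildeI n"
    using Cons.prems R
    by (intro tildeI_fmul_left[OF Cons.IH] inF_Xword) (auto simp: commuting_roots_def)
  moreover have "Xword (x # sort xs) - Xword (insort x (sort xs)) \<in> tildeI n"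
    using Cons.prems by (intro Xword_insort_in_tildeI[OF R]) auto
  moreover have "Xword (x # xs) - Xword (sort (x # xs)) =
      fmul (Xword [x]) (Xword xs - Xword (sort xs))
      + (Xword (x # sort xs) - Xword (insort x (sort xs)))"
    by (simp add: fmul_diff_right fmul_Xword)
  ultimately show ?case by (metis tildeI_add)
qed (simp add: tildeI_zero tildeI.zero)

lemma sum_list_le_len: "(\<forall>x\<in>set xs. x \<le> B) \<Longrightarrow> sum_list xs \<le> int (length xs) * (B::int)"
  by (induction xs) (auto simp: algebra_simps)

lemma sum_list_eq_add_remove1: "x \<in> set xs \<Longrightarrow> sum_list xs = x + sum_list (remove1 x (xs::int list))"
  by (induction xs) auto

lemma elem_ge_sum_minus_bound:
  assumes "length xs = k + 1" "\<forall>y\<in>set xs. y \<le> B" "x \<in> set xs"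
  shows "sum_list xs - int k * (B::int) \<le> x"
proof -
  have "sum_list (remove1 x xs) \<le> int (length (remove1 x xs)) * B"
    using assms(2) set_remove1_subset[of x xs] by (intro sum_list_le_len) blast
  moreover have "length (remove1 x xs) = k"
    using assms(1,3) by (simp add: length_remove1)
  ultimately show ?thesis
    using sum_list_eq_add_remove1[OF assms(3)] by simp
qed

lemma finite_words:
  "finite {w::word. length w = L \<and> (\<forall>x\<in>set w. snd x = r \<and> lo \<le> fst x \<and> fst x \<le> hi)}"
proof (rule finite_subset)
  show "finite {xs. set xs \<subseteq> {lo..hi} \<times> {r} \<and> length xs = L}"
    by (rule finite_lists_length_eq) simp
qed auto

lemma sum_fst_update:
  "p < length (b::word) \<Longrightarrow>
     sum_list (map fst (b[p := x])) = sum_list (map fst b) + fst x - fst (b ! p)"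
  by (induction b arbitrary: p) (auto split: nat.split)

lemma ball_set_list_update:
  "p < length w \<Longrightarrow> (\<forall>x\<in>set (w[p := v]). P x) \<longleftrightarrow> P v \<and> (\<forall>q<length w. q \<noteq> p \<longrightarrow> P (w ! q))"
  by (auto simp: all_set_conv_all_nth nth_list_update)

lemma sorted_le_last: "sorted u \<Longrightarrow> x \<in> set u \<Longrightarrow> x \<le> last u"
proof (induction u rule: rev_induct)
  case (snoc y ys) then show ?case by (auto simp: sorted_append)
qed simp

lemma word_le_last:
  assumes "word_le w j" "w \<noteq> []"
  shows "fst (last w) \<le> j"
proof -
  have "drop (length w - 1) w = [last w]"
    using assms(2) by (induction w rule: rev_induct) auto
  moreover have "sum_list (map fst (drop (length w - 1) w)) \<le> j"
    using assms unfolding word_le_def by simp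
  ultimately show ?thesis by simp
qed

lemma fst_le_last_if_sorted: "sorted (map fst w) \<Longrightarrow> x \<in> set w \<Longrightarrow> fst x \<le> fst (last (w::word))"
  using sorted_le_last[of "map fst w" "fst x"] by (cases "w = []") (auto simp: last_map)

lemma in_Mplus_last:
  assumes "u \<noteq> []" "fst (last u) + sum_list (map fst c) \<ge> 0"
  shows "in_Mplus (u @ c)"
proof -
  have u: "u = butlast u @ [last u]" using assms(1) by simp
  have "drop (length u - 1) (u @ c) = last u # c" by (subst u, subst (2) u) simp
  moreover have "length u - 1 < length (u @ c)" using assms(1) by (cases u) auto
  ultimately show ?thesis
    unfolding in_Mplus_def using assms(2) by (intro conjI exI[of _ "length u - 1"]) auto
qed

lemma sorted_if_sorted_fst:
  "\<forall>x\<in>set w. snd x = r \<Longrightarrow> sorted (map fst w) \<Longrightarrow> sorted (w::word)"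
  by (induction w) (auto simp: less_eq_prod_def)

lemma sorted_fst_if_sorted: "sorted (w::word) \<Longrightarrow> sorted (map fst w)"
  by (induction w) (auto simp: less_eq_prod_def)

lemma sort_eq_iff_mset_eq: "sorted u \<Longrightarrow> sort w = u \<longleftrightarrow> mset w = mset (u::word)"
  by (metis mset_sort properties_for_sort)

text \<open>Modulo \<open>tildeI n\<close>, \<open>f\<close> may be replaced by the sum over sorted words of its sort-class
  coefficients. Classes with a letter of degree \<open>\<ge> N\<close> end, after appending \<open>c\<close>, in \<open>M\<^sub>+\<close>
  (the largest letter of a sorted word is its last), and the others vanish by hypothesis.\<close>
lemma in_J_by_sorting:
  assumes R: "commuting_roots n R" and fin: "finite {w. f w \<noteq> 0}"
    and supp: "\<And>w x. f w \<noteq> 0 \<Longrightarrow> x \<in> set w \<Longrightarrow> snd x \<in> R"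
    and c: "valid_word n c"
    and coeff: "\<And>u. sorted u \<Longrightarrow> \<forall>x\<in>set u. fst x < N \<Longrightarrow> (\<Sum>w\<in>{w. f w \<noteq> 0 \<and> sort w = u}. f w) = 0"
    and N: "N + sum_list (map fst c) \<ge> 0"
  shows "in_J n k (fmul f (Xword c))"
proof -
  define S where "S = {w. f w \<noteq> 0}"
  have "finite S" using fin by (simp add: S_def)
  define g where "g = (\<Sum>w\<in>S. fscale (f w) (Xword (sort w)))"
  have "f - g = (\<Sum>w\<in>S. fscale (f w) (Xword w - Xword (sort w)))"
    by (subst fn_eq_sum_Xword[OF \<open>finite S\<close>]) (auto simp: S_def g_def fscale_diff sum_subtractf)
  moreover have "(\<Sum>w\<in>S. fscale (f w) (Xword w - Xword (sort w))) \<in> tildeI n"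
    using supp by (intro tildeI_sum tildeI_scale Xword_sort_in_tildeI[OF R]) (auto simp: S_def)
  ultimately have "in_J n k (fmul (f - g) (Xword c))"
    using inF_Xword[OF c] by (simp add: tildeI_fmul_right in_J_tildeI)
  moreover
  define coeff_of where "coeff_of u = (\<Sum>w\<in>{w\<in>S. sort w = u}. f w)" for u
  have "g = (\<Sum>u\<in>sort ` S. \<Sum>w\<in>{w\<in>S. sort w = u}. fscale (f w) (Xword (sort w)))"
    unfolding g_def by (rule sum.image_gen[OF \<open>finite S\<close>])
  then have g: "g = (\<Sum>u\<in>sort ` S. fscale (coeff_of u) (Xword u))"
    unfolding coeff_of_def by (simp add: sum_fscale_const)
  have "in_J n k (fscale (coeff_of u) (Xword (u @ c)))" if u: "u \<in> sort ` S" for u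
  proof (cases "coeff_of u = 0")
    case False
    obtain w where w: "w \<in> S" "u = sort w" using u by auto
    have "{w\<in>S. sort w = u} = {w. f w \<noteq> 0 \<and> sort w = u}" by (auto simp: S_def)
    then obtain x where x: "x \<in> set u" "N \<le> fst x"
      using coeff[of u] False w by (force simp: coeff_of_def)
    moreover have "sorted u" using w by simp
    ultimately have "in_Mplus (u @ c)"
      using N fst_le_last_if_sorted[of u x] sorted_fst_if_sorted[of u] by (intro in_Mplus_last) auto
    moreover have "valid_word n u"
      using R supp w by (auto simp: S_def commuting_roots_def valid_word_def)
    ultimately have "Mplus_fn n (Xword (u @ c))"
      using c inF_Xword[of n "u @ c"] by (auto simp: Mplus_fn_def Xword_def split: if_split_asm)
    then show ?thesis by (intro in_J_Mplus_fn Mplus_fn_scale)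
  qed (simp add: in_J_zero)
  then have "in_J n k (fmul g (Xword c))"
    unfolding g by (simp add: fmul_sum_left fmul_scale_left fmul_Xword in_J_sum)
  ultimately show ?thesis
    using in_J_add by (fastforce simp: fmul_diff_left)
qed

section \<open>Symmetric sums over a box\<close>

definition box_words :: "nat \<Rightarrow> nat \<Rightarrow> int \<Rightarrow> int \<Rightarrow> word set" where
  "box_words k i D t = {w. length w = k + 1
     \<and> (\<forall>x\<in>set w. snd x = simple_root i \<and> -D \<le> fst x \<and> fst x \<le> D) \<and> sum_list (map fst w) = -t}"

definition box_sum :: "nat \<Rightarrow> nat \<Rightarrow> int \<Rightarrow> int \<Rightarrow> fn" where
  "box_sum k i D t = (\<lambda>w. if w \<in> box_words k i D t then 1 else 0)"

lemma finite_box_words: "finite (box_words k i D t)"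
  unfolding box_words_def
  by (rule finite_subset[OF _ finite_words[of "k + 1" "simple_root i" "-D" D]]) auto

lemma box_sum_eq_sum_Xword: "box_sum k i D t = (\<Sum>b\<in>box_words k i D t. Xword b)"
proof -
  have "box_sum k i D t = (\<Sum>b\<in>box_words k i D t. fscale (box_sum k i D t b) (Xword b))"
    by (rule fn_eq_sum_Xword[OF finite_box_words]) (simp add: box_sum_def subset_iff)
  also have "\<dots> = (\<Sum>b\<in>box_words k i D t. Xword b)"
    by (intro sum.cong refl) (simp add: box_sum_def)
  finally show ?thesis .
qed

lemma pos_root_simple_root: "1 \<le> i \<Longrightarrow> i \<le> n \<Longrightarrow> pos_root n (simple_root i)"
  by (simp add: pos_root_def simple_root_def)

lemma Cst_simple_root_self: "Cst (simple_root i) (simple_root i) = 0"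
  by (simp add: Cst_def simple_root_def)

lemma commuting_roots_simple_root: "1 \<le> i \<Longrightarrow> i \<le> n \<Longrightarrow> commuting_roots n {simple_root i}"
  by (simp add: commuting_roots_def pos_root_simple_root Cst_simple_root_self)

lemma valid_word_box_words: "1 \<le> i \<Longrightarrow> i \<le> n \<Longrightarrow> w \<in> box_words k i D t \<Longrightarrow> valid_word n w"
  by (auto simp: box_words_def valid_word_def pos_root_simple_root)

lemma inF0_box_sum:
  assumes "1 \<le> i" "i \<le> n"
  shows "inF0 n (box_sum k i D t)"
  unfolding inF0_def
proof (intro conjI allI impI)
  fix a assume "box_sum k i D t a \<noteq> 0"
  then have "a \<in> box_words k i D t" by (simp add: box_sum_def)
  then show "valid_word n a" using valid_word_box_words[OF assms] by blast
next
  have "{w. box_sum k i D t w \<noteq> 0} = box_words k i D t" by (simp add: box_sum_def)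
  then show "finite {w. box_sum k i D t w \<noteq> 0}" using finite_box_words by simp
qed

lemma box_words_if_bounded:
  assumes "length w = k + 1" "\<forall>x\<in>set w. snd x = simple_root i" "sum_list (map fst w) = -t"
    and "\<forall>x\<in>set w. fst x < N" "0 \<le> N" "\<bar>t\<bar> + int k * N + N \<le> D"
  shows "w \<in> box_words k i D t"
proof -
  have "-D \<le> fst x \<and> fst x \<le> D" if x: "x \<in> set w" for x
  proof -
    have "sum_list (map fst w) - int k * N \<le> fst x"
      by (rule elem_ge_sum_minus_bound) (use assms(1,4) x in auto)
    moreover have "fst x < N" "0 \<le> int k * N" using assms(4,5) x by auto
    ultimately show ?thesis
      using assms(3,5,6) abs_ge_self[of t] abs_ge_minus_self[of t] by linarith
  qed
  then show ?thesis using assms(1-3) by (simp add: box_words_def)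
qed

lemma in_J_Rlift:
  assumes i: "1 \<le> i" "i \<le> n"
  shows "in_J n k (Rlift k i t)"
proof (cases "t \<ge> int k + 1")
  case True
  then have "Rlift k i t \<in> Igens n k" using i unfolding Igens_def by blast
  then show ?thesis by (intro in_J_Ilift Ilift_gen)
next
  case False
  have "Rlift k i t w = 0" for w
  proof (rule ccontr)
    assume "Rlift k i t w \<noteq> 0"
    then have "length w = k + 1" "\<forall>x\<in>set w. fst x \<le> -1" "sum_list (map fst w) = - t"
      by (auto simp: Rlift_def split: if_split_asm)
    then show False
      using False sum_list_le_len[of "map fst w" "-1"] by auto
  qed
  then have "Rlift k i t = 0" by (simp add: fun_eq_iff)
  then show ?thesis by (simp add: in_J_zero)
qed

lemma box_sum_in_J:
  assumes i: "1 \<le> i" "i \<le> n" and D: "\<bar>t\<bar> \<le> D"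
  shows "in_J n k (box_sum k i D t)"
proof -
  define f where "f = box_sum k i D t - Rlift k i t"
  have Rlift_box: "w \<in> box_words k i D t" if "Rlift k i t w \<noteq> 0" for w
    using that D
    by (intro box_words_if_bounded[where N = 0]) (auto simp: Rlift_def split: if_split_asm)
  have f_box: "{w. f w \<noteq> 0} \<subseteq> box_words k i D t"
    using Rlift_box by (auto simp: f_def box_sum_def)
  have "in_J n k (fmul f (Xword []))"
  proof (rule in_J_by_sorting[OF commuting_roots_simple_root[OF i], where N = 0])
    show "finite {w. f w \<noteq> 0}" using f_box finite_box_words by (rule finite_subset)
    show "snd x \<in> {simple_root i}" if "f w \<noteq> 0" "x \<in> set w" for w x
      using f_box that by (auto simp: box_words_def)
  next
    fix u :: word assume u: "\<forall>x\<in>set u. fst x < 0"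
    have "f w = 0" if "sort w = u" for w
    proof (cases "w \<in> box_words k i D t")
      case True
      have "\<forall>x\<in>set w. fst x \<le> -1"
        using u that by force
      then have "Rlift k i t w = 1"
        using True by (auto simp: box_words_def Rlift_def)
      then show ?thesis using True by (simp add: f_def box_sum_def)
    qed (use f_box in auto)
    then show "(\<Sum>w\<in>{w. f w \<noteq> 0 \<and> sort w = u}. f w) = 0" by simp
  qed simp_all
  then have "in_J n k (f + Rlift k i t)"
    using in_J_Rlift[OF i] by (simp add: in_J_add)
  then show ?thesis by (simp add: f_def)
qed

section \<open>Commuting a letter past a symmetric sum\<close>

lemma pos_root_root_sum:
  "pos_root n a \<Longrightarrow> pos_root n b \<Longrightarrow> Cst a b \<noteq> 0 \<Longrightarrow> pos_root n (root_sum a b)"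
  by (auto simp: pos_root_def Cst_def root_sum_def split: if_split_asm)

lemma commuting_roots_simple_root_sum:
  assumes "1 \<le> i" "i \<le> n" "pos_root n \<beta>" "Cst (simple_root i) \<beta> \<noteq> 0"
  shows "commuting_roots n {simple_root i, root_sum (simple_root i) \<beta>}"
proof -
  obtain b1 b2 where b: "\<beta> = (b1, b2)" by fastforce
  have pb: "1 \<le> b1" "b1 < b2" "b2 \<le> n + 1" using assms(3) b by (auto simp: pos_root_def)
  have c: "i + 1 = b1 \<or> b2 = i"
    using assms(4) b by (auto simp: Cst_def simple_root_def split: if_split_asm)
  have pg: "pos_root n (root_sum (simple_root i) \<beta>)"
    using pos_root_root_sum[OF pos_root_simple_root[OF assms(1,2)] assms(3,4)] .
  show ?thesis
    using c pb b pg pos_root_simple_root[OF assms(1,2)]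
    by (auto simp: commuting_roots_def Cst_def root_sum_def simple_root_def pos_root_def)
qed

definition merge_sum :: "nat \<Rightarrow> nat \<Rightarrow> int \<Rightarrow> int \<Rightarrow> letter \<Rightarrow> fn" where
  "merge_sum k i D t l = (\<Sum>b\<in>box_words k i D t. \<Sum>p<k+1. Xword (merge_at b l p))"

lemma commutator_terms_box_word:
  "b \<in> box_words k i D t \<Longrightarrow>
     commutator_terms b l = fscale (Cst (simple_root i) (snd l)) (\<Sum>p<k+1. Xword (merge_at b l p))"
  unfolding commutator_terms_def fscale_sum
  by (intro sum.cong) (auto simp: box_words_def)

lemma box_sum_commutator:
  assumes "1 \<le> i" "i \<le> n" "pos_root n (snd l)"
  shows "fmul (box_sum k i D t) (Xword [l]) - fmul (Xword [l]) (box_sum k i D t)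
           - fscale (Cst (simple_root i) (snd l)) (merge_sum k i D t l) \<in> tildeI n"
proof -
  have "fmul (box_sum k i D t) (Xword [l]) - fmul (Xword [l]) (box_sum k i D t)
          - fscale (Cst (simple_root i) (snd l)) (merge_sum k i D t l)
      = (\<Sum>b\<in>box_words k i D t. Xword (b @ [l]) - Xword (l # b) - commutator_terms b l)"
    unfolding box_sum_eq_sum_Xword merge_sum_def fmul_sum_left fmul_sum_right fscale_sum
      sum_subtractf
    by (simp add: fmul_Xword commutator_terms_box_word fscale_sum
        del: sum.lessThan_Suc cong: sum.cong)
  moreover have
    "(\<Sum>b\<in>box_words k i D t. Xword (b @ [l]) - Xword (l # b) - commutator_terms b l) \<in> tildeI n"
    using valid_word_box_words[OF assms(1,2)] assms(3) by (intro tildeI_sum Xword_snoc_commute) auto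
  ultimately show ?thesis by simp
qed

definition merge_preimages ::
    "nat \<Rightarrow> nat \<Rightarrow> int \<Rightarrow> int \<Rightarrow> letter \<Rightarrow> word \<Rightarrow> (word \<times> nat) set" where
  "merge_preimages k i D t l w =
     {q. q \<in> box_words k i D t \<times> {..<k+1} \<and> merge_at (fst q) l (snd q) = w}"

lemma merge_sum_eq_card: "merge_sum k i D t l w = of_nat (card (merge_preimages k i D t l w))"
proof -
  have "merge_sum k i D t l w =
      (\<Sum>q\<in>box_words k i D t \<times> {..<k+1}. if merge_at (fst q) l (snd q) = w then 1 else 0)"
    unfolding merge_sum_def sum_fun_apply sum.cartesian_product
    by (simp add: Xword_def eq_commute case_prod_beta)
  also have "\<dots> = of_nat (card (merge_preimages k i D t l w))"
    unfolding merge_preimages_def by (simp add: sum.If_cases finite_box_words Int_def)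
  finally show ?thesis .
qed

lemma merge_preimages_eq:
  "merge_preimages k i D t (m, \<beta>) w =
     (\<lambda>p. (w[p := (fst (w ! p) - m, simple_root i)], p)) `
       {p. p < k + 1 \<and> snd (w ! p) = root_sum (simple_root i) \<beta>
           \<and> w[p := (fst (w ! p) - m, simple_root i)] \<in> box_words k i D t}"
  (is "?P = ?f ` ?I")
proof
  show "?P \<subseteq> ?f ` ?I"
  proof
    fix q assume "q \<in> ?P"
    then obtain b p where q: "q = (b, p)" "b \<in> box_words k i D t" "p < k + 1"
      and w: "w = b[p := (fst (b ! p) + m, root_sum (snd (b ! p)) \<beta>)]"
      by (auto simp: merge_preimages_def merge_at_def)
    have lb: "length b = k + 1" and bp: "snd (b ! p) = simple_root i"
      using q(2,3) by (auto simp: box_words_def)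
    have "w[p := (fst (w ! p) - m, simple_root i)] = b[p := (fst (b ! p), snd (b ! p))]"
      using w q(3) lb bp by simp
    then have "w[p := (fst (w ! p) - m, simple_root i)] = b"
      by simp
    then show "q \<in> ?f ` ?I"
      using q w lb bp by (intro image_eqI[where x = p]) auto
  qed
  show "?f ` ?I \<subseteq> ?P"
  proof
    fix q assume "q \<in> ?f ` ?I"
    then obtain p where p: "q = ?f p" "p < k + 1" "snd (w ! p) = root_sum (simple_root i) \<beta>"
      and b: "w[p := (fst (w ! p) - m, simple_root i)] \<in> box_words k i D t" by blast
    have "p < length w" using b p(2) by (simp add: box_words_def)
    then have "merge_at (w[p := (fst (w ! p) - m, simple_root i)]) (m, \<beta>) p = w"
      using p(3) by (simp add: merge_at_def flip: p(3))
    then show "q \<in> ?P" using p b by (simp add: merge_preimages_def)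
  qed
qed

lemma card_merge_preimages:
  "card (merge_preimages k i D t (m, \<beta>) w) =
     card {p. p < k + 1 \<and> snd (w ! p) = root_sum (simple_root i) \<beta>
              \<and> w[p := (fst (w ! p) - m, simple_root i)] \<in> box_words k i D t}"
  unfolding merge_preimages_eq by (rule card_image) (simp add: inj_on_def)

lemma box_words_update_iff:
  assumes "p < length w"
  shows "w[p := v] \<in> box_words k i D t \<longleftrightarrow>
    length w = k + 1 \<and> snd v = simple_root i \<and> -D \<le> fst v \<and> fst v \<le> D
    \<and> (\<forall>q<length w. q \<noteq> p \<longrightarrow> snd (w ! q) = simple_root i \<and> -D \<le> fst (w ! q) \<and> fst (w ! q) \<le> D)
    \<and> sum_list (map fst w) - fst (w ! p) + fst v = -t"
  using assms unfolding box_words_def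
  by (simp add: ball_set_list_update sum_fst_update algebra_simps)

lemma box_words_update_shift:
  assumes small: "\<forall>x\<in>set w. fst x < N" and D: "D \<ge> \<bar>t\<bar> + 2 * \<bar>m\<bar> + (int k + 1) * \<bar>N\<bar>"
    and p: "p < length w"
  shows "w[p := (fst (w ! p) - m, simple_root i)] \<in> box_words k i D t \<longleftrightarrow>
         w[p := (fst (w ! p), simple_root i)] \<in> box_words k i D (t - m)"
proof -
  have "-D \<le> fst (w ! p) - m \<and> fst (w ! p) - m \<le> D \<and> -D \<le> fst (w ! p) \<and> fst (w ! p) \<le> D"
    if "length w = k + 1" "sum_list (map fst w) = m - t"
  proof -
    have "m - t - int k * N \<le> fst (w ! p)"
      using elem_ge_sum_minus_bound[of "map fst w" k N "fst (w ! p)"] small p that by fastforce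
    moreover have "fst (w ! p) < N" using small p by auto
    moreover have "int k * N \<le> int k * \<bar>N\<bar>" "- (int k * N) \<le> int k * \<bar>N\<bar>"
      using mult_left_mono[of N "\<bar>N\<bar>" "int k"] mult_left_mono[of "- N" "\<bar>N\<bar>" "int k"] by simp_all
    ultimately show ?thesis using D by (simp add: algebra_simps) linarith
  qed
  then show ?thesis
    unfolding box_words_update_iff[OF p] by auto
qed

lemma card_merge_preimages_shift:
  assumes "\<forall>x\<in>set w. fst x < N" "D \<ge> \<bar>t\<bar> + 2 * \<bar>m\<bar> + (int k + 1) * \<bar>N\<bar>"
  shows "card (merge_preimages k i D t (m, \<beta>) w) = card (merge_preimages k i D (t - m) (0, \<beta>) w)"
proof -
  have "w[p := (fst (w ! p) - m, simple_root i)] \<in> box_words k i D t \<longleftrightarrow>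
        w[p := (fst (w ! p) - 0, simple_root i)] \<in> box_words k i D (t - m)" if "p < k + 1" for p
  proof (cases "p < length w")
    case True
    then show ?thesis using box_words_update_shift[OF assms] by simp
  next
    case False
    then show ?thesis using that by (simp add: box_words_def)
  qed
  then show ?thesis
    unfolding card_merge_preimages by (intro arg_cong[where f = card]) blast
qed

lemma merge_sum_nonzero:
  assumes "merge_sum k i D t l w \<noteq> 0"
  shows "\<exists>b p. b \<in> box_words k i D t \<and> p < k + 1 \<and> w = merge_at b l p"
proof -
  have "merge_preimages k i D t l w \<noteq> {}"
    using assms by (auto simp: merge_sum_eq_card)
  then show ?thesis by (auto simp: merge_preimages_def)
qed

lemma finite_merge_sum_support: "finite {w. merge_sum k i D t l w \<noteq> 0}"
proof (rule finite_subset)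
  show "{w. merge_sum k i D t l w \<noteq> 0} \<subseteq>
      (\<lambda>(b, p). merge_at b l p) ` (box_words k i D t \<times> {..<k + 1})"
    by (auto dest!: merge_sum_nonzero)
qed (simp add: finite_box_words)

lemma set_merge_at:
  "x \<in> set (merge_at b l p) \<Longrightarrow> x \<in> set b \<or> x = (fst (b ! p) + fst l, root_sum (snd (b ! p)) (snd l))"
  unfolding merge_at_def using set_update_subset_insert by fastforce

lemma in_J_merge_sum_shift:
  assumes i: "1 \<le> i" "i \<le> n" and \<beta>: "pos_root n \<beta>" "Cst (simple_root i) \<beta> \<noteq> 0"
    and c: "valid_word n c"
    and D: "D \<ge> \<bar>t\<bar> + 2 * \<bar>m\<bar> + (int k + 1) * \<bar>- sum_list (map fst c)\<bar>"
  shows "in_J n k (fmul (merge_sum k i D t (m, \<beta>) - merge_sum k i D (t - m) (0, \<beta>)) (Xword c))"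
proof -
  define f where "f = merge_sum k i D t (m, \<beta>) - merge_sum k i D (t - m) (0, \<beta>)"
  have supp: "\<exists>b p t' m'. b \<in> box_words k i D t' \<and> p < k + 1 \<and> w = merge_at b (m', \<beta>) p"
    if "f w \<noteq> 0" for w
  proof -
    have "merge_sum k i D t (m, \<beta>) w \<noteq> 0 \<or> merge_sum k i D (t - m) (0, \<beta>) w \<noteq> 0"
      using that by (auto simp: f_def)
    then show ?thesis using merge_sum_nonzero by blast
  qed
  show ?thesis unfolding f_def[symmetric]
  proof (rule in_J_by_sorting[OF commuting_roots_simple_root_sum[OF i \<beta>] _ _ c,
        where N = "- sum_list (map fst c)"])
    have "{w. f w \<noteq> 0} \<subseteq>
        {w. merge_sum k i D t (m, \<beta>) w \<noteq> 0} \<union> {w. merge_sum k i D (t - m) (0, \<beta>) w \<noteq> 0}"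
      by (auto simp: f_def)
    then show "finite {w. f w \<noteq> 0}"
      by (rule finite_subset) (simp add: finite_merge_sum_support)
  next
    fix w x assume "f w \<noteq> 0" "x \<in> set w"
    then obtain b p t' m'
      where "b \<in> box_words k i D t'" "p < k + 1" "x \<in> set (merge_at b (m', \<beta>) p)"
      using supp by blast
    then show "snd x \<in> {simple_root i, root_sum (simple_root i) \<beta>}"
      by (auto simp: box_words_def dest!: set_merge_at)
  next
    fix u :: word
    assume u: "\<forall>x\<in>set u. fst x < - sum_list (map fst c)"
    have "f w = 0" if "sort w = u" for w
    proof -
      have "\<forall>x\<in>set w. fst x < - sum_list (map fst c)" using u that by (metis set_sort)
      then show ?thesis
        using card_merge_preimages_shift[OF _ D] by (simp add: f_def merge_sum_eq_card)
    qed
    then show "(\<Sum>w\<in>{w. f w \<noteq> 0 \<and> sort w = u}. f w) = 0" by simp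
  qed simp
qed

lemma Mplus_fn_fmul_Xword:
  assumes "inF n f" "valid_word n v" "in_Mplus v"
  shows "Mplus_fn n (fmul f (Xword v))"
  unfolding Mplus_fn_def
proof (intro conjI allI impI)
  show "inF n (fmul f (Xword v))" using assms by (intro inF_fmul inF_Xword)
  fix w assume "fmul f (Xword v) w \<noteq> 0"
  then obtain u where "w = u @ v" using fmul_nonzero_split by (fastforce simp: Xword_def)
  then show "in_Mplus w" using assms(3) by (simp add: in_Mplus_append)
qed

lemma valid_word_merge_at:
  assumes "valid_word n c" "p < length c" "pos_root n (snd l)" "Cst (snd (c ! p)) (snd l) \<noteq> 0"
  shows "valid_word n (merge_at c l p)"
proof -
  have "pos_root n (root_sum (snd (c ! p)) (snd l))"
    using assms pos_root_root_sum by (auto simp: valid_word_def)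
  then show ?thesis
    using assms(1) by (auto simp: valid_word_def dest!: set_merge_at)
qed

lemma in_J_box_sum_zero_Cons:
  assumes i: "1 \<le> i" "i \<le> n" and \<beta>: "pos_root n \<beta>" and c: "valid_word n c"
    and merged: "\<forall>p<length c. Cst (snd (c ! p)) \<beta> \<noteq> 0 \<longrightarrow>
                   in_J n k (fmul (box_sum k i D t) (Xword (merge_at c (0, \<beta>) p)))"
  shows "in_J n k (fmul (box_sum k i D t) (Xword ((0, \<beta>) # c)))"
proof -
  let ?S = "box_sum k i D t"
  let ?\<tau> = "Xword (c @ [(0, \<beta>)]) - Xword ((0, \<beta>) # c) - commutator_terms c (0, \<beta>)"
  have S: "inF n ?S" using inF0_box_sum[OF i] by (rule inF0_imp_inF)
  have "in_J n k (fmul ?S (Xword (c @ [(0, \<beta>)])))"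
    using c \<beta>
    by (intro in_J_Mplus_fn Mplus_fn_fmul_Xword[OF S])
      (auto simp: in_Mplus_def intro: in_Mplus_append)
  moreover have "in_J n k (fmul ?S ?\<tau>)"
    using tildeI_fmul_left[OF Xword_snoc_commute[OF c] S] \<beta> by (simp add: in_J_tildeI)
  moreover have "fmul ?S (commutator_terms c (0, \<beta>)) =
      (\<Sum>p<length c. fscale (Cst (snd (c ! p)) \<beta>) (fmul ?S (Xword (merge_at c (0, \<beta>) p))))"
    unfolding commutator_terms_def by (simp add: fmul_sum_right fmul_scale_right)
  moreover have
    "in_J n k (\<Sum>p<length c. fscale (Cst (snd (c ! p)) \<beta>) (fmul ?S (Xword (merge_at c (0, \<beta>) p))))"
  proof (rule in_J_sum)
    fix p assume "p \<in> {..<length c}"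
    then show "in_J n k (fscale (Cst (snd (c ! p)) \<beta>) (fmul ?S (Xword (merge_at c (0, \<beta>) p))))"
      using merged by (cases "Cst (snd (c ! p)) \<beta> = 0") (auto simp: in_J_zero in_J_scale)
  qed
  moreover have "fmul ?S (Xword ((0, \<beta>) # c)) =
      fmul ?S (Xword (c @ [(0, \<beta>)])) - fmul ?S (commutator_terms c (0, \<beta>)) - fmul ?S ?\<tau>"
    by (simp add: fmul_diff_right)
  ultimately show ?thesis by (simp add: in_J_diff)
qed

lemma in_J_box_sum_Cons_iff:
  assumes i: "1 \<le> i" "i \<le> n" and \<beta>: "pos_root n \<beta>" and c: "valid_word n c"
    and J: "in_J n k (fmul (box_sum k i D t) (Xword c))"
  shows "in_J n k (fmul (box_sum k i D t) (Xword ((m, \<beta>) # c))) \<longleftrightarrow>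
         in_J n k (fscale (Cst (simple_root i) \<beta>) (fmul (merge_sum k i D t (m, \<beta>)) (Xword c)))"
proof -
  let ?S = "box_sum k i D t"
  let ?C = "Cst (simple_root i) \<beta>"
  define \<tau> where
    "\<tau> = fmul ?S (Xword [(m, \<beta>)]) - fmul (Xword [(m, \<beta>)]) ?S - fscale ?C (merge_sum k i D t (m, \<beta>))"
  have "\<tau> \<in> tildeI n"
    unfolding \<tau>_def using box_sum_commutator[OF i, of "(m, \<beta>)"] \<beta> by simp
  then have "in_J n k (fmul \<tau> (Xword c))"
    using inF_Xword[OF c] by (intro in_J_tildeI tildeI_fmul_right)
  moreover have "in_J n k (fmul (Xword [(m, \<beta>)]) (fmul ?S (Xword c)))"
    using \<beta> by (intro in_J_fmul_left[OF J] inF0_Xword) auto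
  ultimately have "in_J n k (fmul \<tau> (Xword c) + fmul (Xword [(m, \<beta>)]) (fmul ?S (Xword c)))"
    by (rule in_J_add)
  moreover have "fmul ?S (Xword ((m, \<beta>) # c)) =
      fscale ?C (fmul (merge_sum k i D t (m, \<beta>)) (Xword c))
      + (fmul \<tau> (Xword c) + fmul (Xword [(m, \<beta>)]) (fmul ?S (Xword c)))"
    unfolding \<tau>_def by (simp add: fmul_diff_left fmul_scale_left fmul_assoc fmul_Xword)
  ultimately show ?thesis by (simp add: in_J_add_iff)
qed

lemma in_J_box_sum_Cons:
  assumes i: "1 \<le> i" "i \<le> n" and \<beta>: "pos_root n \<beta>" and c: "valid_word n c"
    and J: "in_J n k (fmul (box_sum k i D t) (Xword c))"
    and J_shift: "in_J n k (fmul (box_sum k i D (t - m)) (Xword c))"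
    and merged: "\<forall>p<length c. Cst (snd (c ! p)) \<beta> \<noteq> 0 \<longrightarrow>
                   in_J n k (fmul (box_sum k i D (t - m)) (Xword (merge_at c (0, \<beta>) p)))"
    and D: "D \<ge> \<bar>t\<bar> + 2 * \<bar>m\<bar> + (int k + 1) * \<bar>- sum_list (map fst c)\<bar>"
  shows "in_J n k (fmul (box_sum k i D t) (Xword ((m, \<beta>) # c)))"
proof -
  let ?C = "Cst (simple_root i) \<beta>"
  let ?Q = "merge_sum k i D t (m, \<beta>)"
  let ?Q' = "merge_sum k i D (t - m) (0, \<beta>)"
  have "in_J n k (fscale ?C (fmul ?Q' (Xword c)))"
    using in_J_box_sum_Cons_iff[OF i \<beta> c J_shift, of 0] in_J_box_sum_zero_Cons[OF i \<beta> c merged]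
    by simp
  moreover have "in_J n k (fscale ?C (fmul (?Q - ?Q') (Xword c)))"
    using in_J_merge_sum_shift[OF i \<beta> _ c D]
    by (cases "?C = 0") (simp_all add: in_J_zero in_J_scale)
  moreover have "fscale ?C (fmul ?Q (Xword c)) =
      fscale ?C (fmul (?Q - ?Q') (Xword c)) + fscale ?C (fmul ?Q' (Xword c))"
    by (simp add: fmul_diff_left fscale_diff)
  ultimately have "in_J n k (fscale ?C (fmul ?Q (Xword c)))"
    by (metis in_J_add)
  then show ?thesis
    using in_J_box_sum_Cons_iff[OF i \<beta> c J] by simp
qed

lemma eventually_in_J_box_sum:
  assumes i: "1 \<le> i" "i \<le> n" and "valid_word n c"
  shows "eventually (\<lambda>D. in_J n k (fmul (box_sum k i D t) (Xword c))) at_top"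
  using assms(3)
proof (induction "length c" arbitrary: c t rule: less_induct)
  case less
  show ?case
  proof (cases c)
    case Nil
    then show ?thesis
      by (auto intro: eventually_mono[OF eventually_ge_at_top[of "\<bar>t\<bar>"]] box_sum_in_J[OF i])
  next
    case (Cons l c')
    obtain m \<beta> where c: "c = (m, \<beta>) # c'" by (cases l) (use Cons in auto)
    have \<beta>: "pos_root n \<beta>" and c': "valid_word n c'" using less.prems c by auto
    have IH: "eventually (\<lambda>D. in_J n k (fmul (box_sum k i D t') (Xword c''))) at_top"
      if "valid_word n c''" "length c'' = length c'" for c'' t'
      using less.hyps that c by simp
    have "eventually (\<lambda>D. Cst (snd (c' ! p)) \<beta> \<noteq> 0 \<longrightarrow>
        in_J n k (fmul (box_sum k i D (t - m)) (Xword (merge_at c' (0, \<beta>) p)))) at_top"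
      if "p < length c'" for p
    proof (cases "Cst (snd (c' ! p)) \<beta> = 0")
      case False
      then have "valid_word n (merge_at c' (0, \<beta>) p)"
        using valid_word_merge_at[OF c' that] \<beta> by simp
      moreover have "length (merge_at c' (0, \<beta>) p) = length c'"
        by (simp add: merge_at_def)
      ultimately show ?thesis
        using IH by (auto elim: eventually_mono)
    qed simp
    then have "eventually (\<lambda>D. \<forall>p\<in>{..<length c'}. Cst (snd (c' ! p)) \<beta> \<noteq> 0 \<longrightarrow>
        in_J n k (fmul (box_sum k i D (t - m)) (Xword (merge_at c' (0, \<beta>) p)))) at_top"
      by (intro eventually_ball_finite) auto
    moreover have "eventually (\<lambda>D. in_J n k (fmul (box_sum k i D t) (Xword c'))) at_top"
      "eventually (\<lambda>D. in_J n k (fmul (box_sum k i D (t - m)) (Xword c'))) at_top"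
      using IH[OF c'] by simp_all
    ultimately show ?thesis
      unfolding c
      using eventually_ge_at_top[of "\<bar>t\<bar> + 2 * \<bar>m\<bar> + (int k + 1) * \<bar>- sum_list (map fst c')\<bar>"]
      by eventually_elim (use in_J_box_sum_Cons[OF i \<beta> c'] in blast)
  qed
qed

section \<open>The completed relation\<close>

lemma calR_nonzero:
  "calR k i t w \<noteq> 0 \<Longrightarrow>
     length w = k + 1 \<and> (\<forall>x\<in>set w. snd x = simple_root i) \<and> sum_list (map fst w) = -t
     \<and> ((\<forall>x\<in>set w. fst x \<le> -1) \<or> (sorted (map fst w) \<and> fst (last w) \<ge> 0))"
  by (simp add: calR_def split: if_split_asm)

lemma calR_negative:
  "length w = k + 1 \<Longrightarrow> \<forall>x\<in>set w. snd x = simple_root i \<Longrightarrow> sum_list (map fst w) = -t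
     \<Longrightarrow> \<forall>x\<in>set w. fst x \<le> -1 \<Longrightarrow> calR k i t w = 1"
  by (simp add: calR_def)

lemma calR_sorted:
  "length w = k + 1 \<Longrightarrow> \<forall>x\<in>set w. snd x = simple_root i \<Longrightarrow> sum_list (map fst w) = -t
     \<Longrightarrow> \<not> (\<forall>x\<in>set w. fst x \<le> -1) \<Longrightarrow> sorted (map fst w) \<Longrightarrow> fst (last w) \<ge> 0
     \<Longrightarrow> calR k i t w = of_nat (multinom (map fst w))"
  unfolding calR_def by (simp only: if_True if_False simp_thms) simp

lemma inF_calR:
  assumes i: "1 \<le> i" "i \<le> n"
  shows "inF n (calR k i t)"
  unfolding inF_def
proof (intro conjI allI impI)
  fix w assume "calR k i t w \<noteq> 0"
  then show "valid_word n w"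
    using calR_nonzero[of k i t w] pos_root_simple_root[OF i] by (auto simp: valid_word_def)
next
  fix j
  let ?lo = "- \<bar>t\<bar> - int k * \<bar>j\<bar>" and ?hi = "\<bar>j\<bar>"
  have "{w. word_le w j \<and> calR k i t w \<noteq> 0} \<subseteq>
        {w. length w = k + 1 \<and> (\<forall>x\<in>set w. snd x = simple_root i \<and> ?lo \<le> fst x \<and> fst x \<le> ?hi)}"
  proof
    fix w assume "w \<in> {w. word_le w j \<and> calR k i t w \<noteq> 0}"
    then have wl: "word_le w j" and nz: "calR k i t w \<noteq> 0" by auto
    note c = calR_nonzero[OF nz]
    have "\<forall>y\<in>set w. fst y \<le> \<bar>j\<bar>"
    proof (cases "\<forall>x\<in>set w. fst x \<le> -1")
      case False
      then have "sorted (map fst w)" "w \<noteq> []" using c by auto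
      then show ?thesis using fst_le_last_if_sorted word_le_last[OF wl] by fastforce
    qed auto
    then have "?lo \<le> fst x \<and> fst x \<le> ?hi" if "x \<in> set w" for x
      using elem_ge_sum_minus_bound[of "map fst w" k "\<bar>j\<bar>" "fst x"] c that by fastforce
    then show
      "w \<in> {w. length w = k + 1 \<and> (\<forall>x\<in>set w. snd x = simple_root i \<and> ?lo \<le> fst x \<and> fst x \<le> ?hi)}"
      using c by auto
  qed
  then show "finite {w. word_le w j \<and> calR k i t w \<noteq> 0}"
    using finite_words by (rule finite_subset)
qed

lemma map_pair_fst: "\<forall>x\<in>set w. snd x = r \<Longrightarrow> map (\<lambda>m. (m, r)) (map fst w) = w"
  by (induction w) auto

lemma card_permutations_word:
  assumes u: "\<forall>x\<in>set u. snd x = r"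
  shows "card (permutations_of_multiset (mset (u::word))) = multinom (map fst u)"
proof -
  let ?A = "permutations_of_multiset (mset u)"
  let ?B = "permutations_of_multiset (mset (map fst u))"
  let ?g = "map (\<lambda>m. (m, r))"
  have "?g (map fst w) = w" if "w \<in> ?A" for w
    using that u
    by (intro map_pair_fst) (auto simp: permutations_of_multiset_def dest: mset_eq_setD)
  moreover have "mset (?g ms) = mset u" if "ms \<in> ?B" for ms
  proof -
    have "mset (?g ms) = mset (?g (map fst u))"
      using that by (simp only: mset_map permutations_of_multiset_def mem_Collect_eq)
    then show ?thesis by (simp only: map_pair_fst[OF u])
  qed
  ultimately have "bij_betw (map fst) ?A ?B"
    by (intro bij_betw_byWitness[where f' = ?g]) (auto simp: permutations_of_multiset_def comp_def)
  moreover have "multinom (map fst u) = card ?B"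
    by (simp add: multinom_def card_permutations_of_multiset)
  ultimately show ?thesis
    by (simp add: bij_betw_same_card)
qed

text \<open>On a class of rearrangements \<open>calR\<close> has the same total weight as the symmetric sum:
  either every rearrangement has weight \<open>1\<close>, or only the sorted one is weighted, by the
  multinomial coefficient, which counts the class.\<close>
lemma sum_permutations_calR:
  assumes u: "sorted u" "length u = k + 1" "\<forall>x\<in>set u. snd x = simple_root i"
    "sum_list (map fst u) = -t"
  shows "(\<Sum>w\<in>permutations_of_multiset (mset u). calR k i t w) =
           of_nat (card (permutations_of_multiset (mset u)))"
proof -
  let ?P = "permutations_of_multiset (mset u)"
  have P: "length w = k + 1 \<and> (\<forall>x\<in>set w. snd x = simple_root i) \<and> sum_list (map fst w) = -t
      \<and> set w = set u" if "w \<in> ?P" for w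
  proof -
    have m: "mset w = mset u" using that by (simp add: permutations_of_multiset_def)
    then have "sum_list (map fst w) = sum_list (map fst u)"
      by (metis mset_map sum_mset_sum_list)
    then show ?thesis using u mset_eq_length[OF m] mset_eq_setD[OF m] by simp
  qed
  show ?thesis
  proof (cases "\<forall>x\<in>set u. fst x \<le> -1")
    case True
    then show ?thesis using P calR_negative by simp
  next
    case False
    have uP: "u \<in> ?P" by (simp add: permutations_of_multiset_def)
    have "calR k i t w = 0" if "w \<in> ?P - {u}" for w
    proof (rule ccontr)
      assume "calR k i t w \<noteq> 0"
      moreover have "\<not> (\<forall>x\<in>set w. fst x \<le> -1)"
        using False P that by auto
      ultimately have "sorted (map fst w)"
        using calR_nonzero by blast
      then have "sorted w" using P that by (intro sorted_if_sorted_fst[of _ "simple_root i"]) auto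
      then have "w = sort w" by (simp add: sorted_sort_id)
      also have "sort w = u"
        using that sort_eq_iff_mset_eq[OF u(1)] by (simp add: permutations_of_multiset_def)
      finally show False using that by simp
    qed
    then have "(\<Sum>w\<in>?P. calR k i t w) = calR k i t u"
      using sum.remove[OF _ uP, of "calR k i t"] by simp
    also have "\<dots> = of_nat (multinom (map fst u))"
    proof (rule calR_sorted[OF u(2-4) False])
      show "sorted (map fst u)" using u(1) by (rule sorted_fst_if_sorted)
      then show "fst (last u) \<ge> 0" using False fst_le_last_if_sorted by force
    qed
    finally show ?thesis using card_permutations_word[OF u(3)] by simp
  qed
qed

lemma Mplus_fn_calR_large_letter:
  assumes i: "1 \<le> i" "i \<le> n" and c: "valid_word n c" and N: "0 \<le> N" "0 \<le> N + sum_list (map fst c)"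
  shows "Mplus_fn n (fmul (\<lambda>w. if \<exists>x\<in>set w. N \<le> fst x then calR k i t w else 0) (Xword c))"
    (is "Mplus_fn n (fmul ?f (Xword c))")
  unfolding Mplus_fn_def
proof (intro conjI allI impI)
  have "inF n ?f" using inF_calR[OF i] by (rule inF_mono) (auto split: if_split_asm)
  then show "inF n (fmul ?f (Xword c))" using inF_Xword[OF c] by (rule inF_fmul)
  fix w assume "fmul ?f (Xword c) w \<noteq> 0"
  then obtain u where w: "w = u @ c" and "?f u \<noteq> 0"
    using fmul_nonzero_split by (fastforce simp: Xword_def)
  then obtain x where x: "x \<in> set u" "N \<le> fst x" and "calR k i t u \<noteq> 0"
    by (auto split: if_split_asm)
  then have "sorted (map fst u)" using calR_nonzero N by force
  then show "in_Mplus w"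
    unfolding w using x N fst_le_last_if_sorted[of u x] by (intro in_Mplus_last) auto
qed

lemma eventually_in_J_calR_minus_box_sum:
  assumes i: "1 \<le> i" "i \<le> n" and c: "valid_word n c"
  shows "eventually (\<lambda>D. in_J n k (fmul (calR k i t - box_sum k i D t) (Xword c))) at_top"
proof -
  define N where "N = \<bar>sum_list (map fst c)\<bar> + 1"
  have N: "0 \<le> N" "0 \<le> N + sum_list (map fst c)" unfolding N_def by auto
  define large where "large = (\<lambda>w. if \<exists>x\<in>set w. N \<le> fst x then calR k i t w else 0)"
  define small where "small = (\<lambda>w. if \<forall>x\<in>set w. fst x < N then calR k i t w else 0)"
  have split: "calR k i t = large + small"
    unfolding large_def small_def by (rule ext) (auto simp: not_le)
  have small_box: "w \<in> box_words k i D t" if "small w \<noteq> 0" "\<bar>t\<bar> + int k * N + N \<le> D" for w D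
    using that calR_nonzero[of k i t w] N
    by (intro box_words_if_bounded) (auto simp: small_def split: if_split_asm)
  have "in_J n k (fmul (calR k i t - box_sum k i D t) (Xword c))"
    if D: "\<bar>t\<bar> + int k * N + N \<le> D" for D
  proof -
    let ?f = "small - box_sum k i D t"
    have "in_J n k (fmul ?f (Xword c))"
    proof (rule in_J_by_sorting[OF commuting_roots_simple_root[OF i] _ _ c, where N = N])
      have "{w. ?f w \<noteq> 0} \<subseteq> box_words k i D t"
        using small_box[OF _ D] by (auto simp: box_sum_def)
      then show "finite {w. ?f w \<noteq> 0}" using finite_box_words by (rule finite_subset)
      then show "snd x \<in> {simple_root i}" if "?f w \<noteq> 0" "x \<in> set w" for w x
        using small_box[OF _ D] that by (auto simp: box_sum_def box_words_def split: if_split_asm)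
    next
      fix u :: word assume u: "sorted u" "\<forall>x\<in>set u. fst x < N"
      let ?P = "permutations_of_multiset (mset u)"
      have "(\<Sum>w\<in>{w. ?f w \<noteq> 0 \<and> sort w = u}. ?f w) = (\<Sum>w\<in>?P. ?f w)"
        using sort_eq_iff_mset_eq[OF u(1)]
        by (intro sum.mono_neutral_left finite_permutations_of_multiset)
          (auto simp: permutations_of_multiset_def)
      also have "\<dots> = 0"
      proof (cases "length u = k + 1 \<and> (\<forall>x\<in>set u. snd x = simple_root i)
          \<and> sum_list (map fst u) = -t")
        case True
        have "small w = calR k i t w \<and> box_sum k i D t w = 1" if "w \<in> ?P" for w
        proof -
          have m: "mset w = mset u" using that by (simp add: permutations_of_multiset_def)
          have "sum_list (map fst w) = sum_list (map fst u)"
            using m by (metis mset_map sum_mset_sum_list)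
          then show ?thesis
            using True u N D mset_eq_length[OF m] mset_eq_setD[OF m]
            by (auto simp: small_def box_sum_def intro!: box_words_if_bounded)
        qed
        then show ?thesis
          using sum_permutations_calR[OF u(1)] True by (simp add: sum_subtractf)
      next
        case False
        have "small w = 0 \<and> box_sum k i D t w = 0" if "w \<in> ?P" for w
        proof -
          have m: "mset w = mset u" using that by (simp add: permutations_of_multiset_def)
          have "sum_list (map fst w) = sum_list (map fst u)"
            using m by (metis mset_map sum_mset_sum_list)
          then show ?thesis
            using False calR_nonzero[of k i t w] mset_eq_length[OF m] mset_eq_setD[OF m]
            by (auto simp: small_def box_sum_def box_words_def)
        qed
        then show ?thesis by simp
      qed
      finally show "(\<Sum>w\<in>{w. ?f w \<noteq> 0 \<and> sort w = u}. ?f w) = 0" .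
    qed (use N in simp)
    moreover have
      "fmul (calR k i t - box_sum k i D t) (Xword c) = fmul large (Xword c) + fmul ?f (Xword c)"
      unfolding split by (simp add: fmul_add_left fmul_diff_left)
    ultimately show ?thesis
      unfolding large_def using Mplus_fn_calR_large_letter[OF i c N]
      by (simp add: in_J_add in_J_Mplus_fn)
  qed
  then show ?thesis
    using eventually_ge_at_top by (rule eventually_mono[rotated])
qed

lemma in_J_calR_times_Xword:
  assumes i: "1 \<le> i" "i \<le> n" and w: "valid_word n w"
  shows "in_J n k (fmul (calR k i t) (Xword w))"
proof -
  have "eventually (\<lambda>D. in_J n k (fmul (calR k i t - box_sum k i D t) (Xword w))
      \<and> in_J n k (fmul (box_sum k i D t) (Xword w))) at_top"
    using eventually_in_J_calR_minus_box_sum[OF i w] eventually_in_J_box_sum[OF i w]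
    by (rule eventually_conj)
  then obtain D where "in_J n k (fmul (calR k i t - box_sum k i D t) (Xword w))"
      "in_J n k (fmul (box_sum k i D t) (Xword w))"
    by (auto simp: eventually_at_top_linorder)
  then show ?thesis by (metis diff_add_cancel fmul_add_left in_J_add)
qed

lemma in_J_calR_times:
  assumes i: "1 \<le> i" "i \<le> n" and a: "inF0 n a"
  shows "in_J n k (fmul (calR k i t) a)"
proof -
  define S where "S = {w. a w \<noteq> 0}"
  have "finite S" using a by (simp add: inF0_def S_def)
  then have "fmul (calR k i t) a = (\<Sum>w\<in>S. fscale (a w) (fmul (calR k i t) (Xword w)))"
    by (subst fn_eq_sum_Xword[OF \<open>finite S\<close>]) (auto simp: S_def fmul_sum_right fmul_scale_right)
  moreover have "valid_word n w" if "w \<in> S" for w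
    using a that by (auto simp: inF0_def S_def)
  ultimately show ?thesis
    by (simp add: in_J_sum in_J_scale in_J_calR_times_Xword[OF i])
qed

theorem corollary4p3:
  fixes n k i :: nat and t :: int and a :: fn
  assumes "n \<ge> 2" and "k \<ge> 1" and "1 \<le> i" and "i \<le> n"
    and "inUneg n a"
  shows "\<exists>x \<in> Ilift n k. \<exists>\<mu>. inF n \<mu> \<and> (\<forall>w. \<mu> w \<noteq> 0 \<longrightarrow> in_Mplus w) \<and>
           fsub (fsub (fmul (calR k i t) a) x) \<mu> \<in> tildeI n"
proof -
  have "in_J n k (fmul (calR k i t) a)"
    using assms(3-5) by (intro in_J_calR_times) (auto simp: inUneg_def)
  then obtain x y \<mu> where "x \<in> Ilift n k" "y \<in> tildeI n" "Mplus_fn n \<mu>"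
    and "fmul (calR k i t) a = x + y + \<mu>"
    unfolding in_J_def by blast
  then show ?thesis
    unfolding Mplus_fn_def by (intro bexI[of _ x] exI[of _ \<mu>]) auto
qed

end
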